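(* For every $n\ge 1$, the Baumslag–Solitar group $BS(1,n)=\langle a,t\mid tat^{-1}=a^n\rangle$ has property (PPH).
   Context: An isometric action on a metric space $Z$ is proper if for all $z\in Z$, $r>0$, $\{g: d(z,gz)\le r\}$ is finite. A group $G$ has property (PPH) if there exist unbounded proper Gromov-hyperbolic (geodesic) spaces $X_1,\ldots,X_l$ on which $G$ acts isometrically and cocompactly such that the diagonal action $g(x_1,\ldots,x_l)=(gx_1,\ldots,gx_l)$ on $\prod_{i=1}^lX_i$ with the $\ell^1$-metric is proper. *)

theory Defs
  imports "HOL-Analysis.Analysis" "HOL-Algebra.Group_Action"
begin

text \<open>Concrete model: the semidirect product Z[1/n] x| Z.  The generators are a = (0, 1) and t = (1, 0);
  one checks t a t^-1 = (0, n) = a^n, and this is the standard realisation of the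
  presentation < a, t | t a t^-1 = a^n >.\<close>

definition n_adic :: "nat \<Rightarrow> rat set" where
  "n_adic n = {b. \<exists>j::nat. b * (of_nat n) ^ j \<in> \<int>}"

definition BS1 :: "nat \<Rightarrow> (int \<times> rat) monoid" where
  "BS1 n = \<lparr> carrier = UNIV \<times> n_adic n,
             mult = (\<lambda>(k, b) (k', b'). (k + k', b + (of_nat n) powi k * b')),
             one = (0, 0) \<rparr>"

definition BS_a :: "int \<times> rat" where "BS_a = (0, 1)"
definition BS_t :: "int \<times> rat" where "BS_t = (1, 0)"

definition proper_metric :: "'a set \<Rightarrow> ('a \<Rightarrow> 'a \<Rightarrow> real) \<Rightarrow> bool" where
  "proper_metric M d \<longleftrightarrow>
     (\<forall>x\<in>M. \<forall>r. compactin (Metric_space.mtopology M d) (Metric_space.mcball M d x r))"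

definition geodesic_metric :: "'a set \<Rightarrow> ('a \<Rightarrow> 'a \<Rightarrow> real) \<Rightarrow> bool" where
  "geodesic_metric M d \<longleftrightarrow>
     (\<forall>x\<in>M. \<forall>y\<in>M. \<exists>\<gamma>::real \<Rightarrow> 'a.
        \<gamma> 0 = x \<and> \<gamma> (d x y) = y \<and> \<gamma> ` {0..d x y} \<subseteq> M \<and>
        (\<forall>s\<in>{0..d x y}. \<forall>u\<in>{0..d x y}. d (\<gamma> s) (\<gamma> u) = \<bar>s - u\<bar>))"

definition gromov_product :: "('a \<Rightarrow> 'a \<Rightarrow> real) \<Rightarrow> 'a \<Rightarrow> 'a \<Rightarrow> 'a \<Rightarrow> real" where
  "gromov_product d w x y = (d w x + d w y - d x y) / 2"

definition gromov_hyperbolic :: "'a set \<Rightarrow> ('a \<Rightarrow> 'a \<Rightarrow> real) \<Rightarrow> bool" where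
  "gromov_hyperbolic M d \<longleftrightarrow>
     (\<exists>\<delta>\<ge>0. \<forall>w\<in>M. \<forall>x\<in>M. \<forall>y\<in>M. \<forall>z\<in>M.
        gromov_product d w x z \<ge> min (gromov_product d w x y) (gromov_product d w y z) - \<delta>)"

definition unbounded_metric :: "'a set \<Rightarrow> ('a \<Rightarrow> 'a \<Rightarrow> real) \<Rightarrow> bool" where
  "unbounded_metric M d \<longleftrightarrow> (\<forall>x\<in>M. \<forall>B. \<exists>y\<in>M. d x y > B) \<and> M \<noteq> {}"

definition isometric_action ::
  "('g, 'm) monoid_scheme \<Rightarrow> 'a set \<Rightarrow> ('a \<Rightarrow> 'a \<Rightarrow> real) \<Rightarrow> ('g \<Rightarrow> 'a \<Rightarrow> 'a) \<Rightarrow> bool" where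
  "isometric_action G M d \<phi> \<longleftrightarrow> group_action G M \<phi> \<and>
     (\<forall>g\<in>carrier G. \<forall>x\<in>M. \<forall>y\<in>M. d (\<phi> g x) (\<phi> g y) = d x y)"

definition cocompact_action ::
  "('g, 'm) monoid_scheme \<Rightarrow> 'a set \<Rightarrow> ('a \<Rightarrow> 'a \<Rightarrow> real) \<Rightarrow> ('g \<Rightarrow> 'a \<Rightarrow> 'a) \<Rightarrow> bool" where
  "cocompact_action G M d \<phi> \<longleftrightarrow>
     (\<exists>K. compactin (Metric_space.mtopology M d) K \<and> (\<Union>g\<in>carrier G. \<phi> g ` K) = M)"

definition proper_action ::
  "('g, 'm) monoid_scheme \<Rightarrow> 'a set \<Rightarrow> ('a \<Rightarrow> 'a \<Rightarrow> real) \<Rightarrow> ('g \<Rightarrow> 'a \<Rightarrow> 'a) \<Rightarrow> bool" where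
  "proper_action G M d \<phi> \<longleftrightarrow>
     (\<forall>z\<in>M. \<forall>r>0. finite {g \<in> carrier G. d z (\<phi> g z) \<le> r})"

definition l1_dist :: "nat \<Rightarrow> (nat \<Rightarrow> 'a \<Rightarrow> 'a \<Rightarrow> real) \<Rightarrow> (nat \<Rightarrow> 'a) \<Rightarrow> (nat \<Rightarrow> 'a) \<Rightarrow> real" where
  "l1_dist l d z w = (\<Sum>i<l. d i (z i) (w i))"

definition diag_action :: "nat \<Rightarrow> (nat \<Rightarrow> 'g \<Rightarrow> 'a \<Rightarrow> 'a) \<Rightarrow> 'g \<Rightarrow> (nat \<Rightarrow> 'a) \<Rightarrow> (nat \<Rightarrow> 'a)" where
  "diag_action l \<phi> g z = (\<lambda>i. if i < l then \<phi> i g (z i) else undefined)"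

text \<open>The spaces are taken inside the ambient type real x real; since every proper metric
  space is separable and hence of cardinality at most the continuum, this is no restriction.\<close>
definition PPH :: "('g, 'm) monoid_scheme \<Rightarrow> bool" where
  "PPH G \<longleftrightarrow>
    (\<exists>(l::nat) (X :: nat \<Rightarrow> (real \<times> real) set) (d :: nat \<Rightarrow> real \<times> real \<Rightarrow> real \<times> real \<Rightarrow> real)
       (\<phi> :: nat \<Rightarrow> 'g \<Rightarrow> real \<times> real \<Rightarrow> real \<times> real).
      (\<forall>i<l. Metric_space (X i) (d i) \<and> unbounded_metric (X i) (d i) \<and>
              proper_metric (X i) (d i) \<and> geodesic_metric (X i) (d i) \<and>
              gromov_hyperbolic (X i) (d i) \<and>
              isometric_action G (X i) (d i) (\<phi> i) \<and> cocompact_action G (X i) (d i) (\<phi> i)) \<and>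
      proper_action G (PiE {..<l} X) (l1_dist l d) (diag_action l \<phi>))"

end

theory Submission
  imports Defs
begin

text \<open>BS(1,n) acts on its Bass--Serre tree, a point of which is an n-adic branch together with a
  height, and, for n \<ge> 2, on the hyperbolic plane by the affine maps z \<mapsto> n^k z + b. If
  g = (k, b) moves a point of the tree by at most R, then |k| \<le> R and b lies in a fixed coset
  of a lattice n^-N \<int>, but b may still be arbitrarily large; moving a point of the plane by at
  most R bounds |b|. Hence only finitely many elements move a point of the product by at most R.
  For n = 1 the tree is a line on which only t acts, and a second line on which only a acts
  takes the place of the plane.\<close>

section \<open>The n-adic rationals and BS(1,n)\<close>

definition n_adics :: "nat \<Rightarrow> 'a::field_char_0 set" where
  "n_adics n = {x. \<exists>j::nat. x * of_nat n ^ j \<in> \<int>}"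

lemma n_adic_eq_n_adics: "n_adic n = n_adics n"
  by (simp add: n_adic_def n_adics_def)

lemma n_adics_add:
  assumes "x \<in> n_adics n" "y \<in> n_adics n" shows "x + y \<in> n_adics n"
proof -
  obtain i j where i: "x * of_nat n ^ i \<in> \<int>" and j: "y * of_nat n ^ j \<in> \<int>"
    using assms by (auto simp: n_adics_def)
  have "(x + y) * of_nat n ^ (i + j) = (x * of_nat n ^ i) * of_nat n ^ j + (y * of_nat n ^ j) * of_nat n ^ i"
    by (simp add: power_add algebra_simps)
  also have "\<dots> \<in> \<int>" using i j by (metis Ints_add Ints_mult Ints_power Ints_of_nat)
  finally show ?thesis by (auto simp: n_adics_def)
qed

lemma n_adics_uminus: "x \<in> n_adics n \<Longrightarrow> - x \<in> n_adics n"
  by (auto simp: n_adics_def)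

lemma n_adics_diff: "x \<in> n_adics n \<Longrightarrow> y \<in> n_adics n \<Longrightarrow> x - y \<in> n_adics n"
  using n_adics_add[of x n "- y"] n_adics_uminus[of y n] by simp

lemma Ints_n_adics: "x \<in> \<int> \<Longrightarrow> x \<in> n_adics n"
  by (auto simp: n_adics_def intro: exI[of _ 0])

lemma n_adics_powi_mult:
  assumes "n \<ge> 1" "x \<in> n_adics n" shows "of_nat n powi k * x \<in> n_adics n"
proof -
  obtain j where j: "x * of_nat n ^ j \<in> \<int>" using assms by (auto simp: n_adics_def)
  show ?thesis
  proof (cases "k \<ge> 0")
    case True
    then have "(of_nat n powi k * x) * of_nat n ^ j = (x * of_nat n ^ j) * of_nat n ^ nat k"
      by (simp add: power_int_def)
    also have "\<dots> \<in> \<int>" using j by (metis Ints_mult Ints_power Ints_of_nat)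
    finally show ?thesis by (auto simp: n_adics_def)
  next
    case False
    have "(of_nat n powi k * x) * of_nat n ^ (j + nat (- k)) = x * of_nat n ^ j"
      using False assms(1) by (simp add: power_int_def power_add field_simps)
    then show ?thesis using j unfolding n_adics_def by (metis (mono_tags) mem_Collect_eq)
  qed
qed

lemma of_rat_n_adics:
  assumes "n \<ge> 1" shows "of_rat ` n_adics n = (n_adics n :: real set)"
proof
  show "of_rat ` n_adics n \<subseteq> (n_adics n :: real set)"
  proof
    fix r :: real assume "r \<in> of_rat ` n_adics n"
    then obtain b j where r: "r = of_rat b" and "b * of_nat n ^ j \<in> \<int>" by (auto simp: n_adics_def)
    then obtain z where "b * of_nat n ^ j = of_int z" by (auto elim: Ints_cases)
    then have "r * of_nat n ^ j = of_int z"
      by (metis r of_rat_mult of_rat_of_int_eq of_rat_of_nat_eq of_rat_power)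
    then show "r \<in> n_adics n" unfolding n_adics_def by (metis (mono_tags) Ints_of_int mem_Collect_eq)
  qed
next
  show "(n_adics n :: real set) \<subseteq> of_rat ` n_adics n"
  proof
    fix r :: real assume "r \<in> n_adics n"
    then obtain j z where z: "r * of_nat n ^ j = of_int z" by (auto simp: n_adics_def elim!: Ints_cases)
    define b :: rat where "b = of_int z / of_nat n ^ j"
    have "b * of_nat n ^ j = of_int z" using assms by (simp add: b_def)
    then have "b \<in> n_adics n" unfolding n_adics_def by (metis (mono_tags) Ints_of_int mem_Collect_eq)
    moreover have "of_rat b = r" using z assms by (simp add: b_def of_rat_divide of_rat_power field_simps)
    ultimately show "r \<in> of_rat ` n_adics n" by blast
  qed
qed

lemma BS1_carrier: "carrier (BS1 n) = UNIV \<times> n_adics n"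
  by (simp add: BS1_def n_adic_eq_n_adics)

lemma BS1_mult: "(k, b) \<otimes>\<^bsub>BS1 n\<^esub> (k', b') = (k + k', b + of_nat n powi k * b')"
  by (simp add: BS1_def)

lemma BS1_one: "\<one>\<^bsub>BS1 n\<^esub> = (0, 0)"
  by (simp add: BS1_def)

lemma of_rat_powi: "(of_rat (of_nat n powi k) :: real) = real n powi k"
  by (simp add: power_int_def of_rat_power of_rat_inverse)

lemma of_rat_BS1_n_adics: "n \<ge> 1 \<Longrightarrow> g \<in> carrier (BS1 n) \<Longrightarrow> of_rat (snd g) \<in> (n_adics n :: real set)"
  by (auto simp: BS1_carrier simp flip: of_rat_n_adics)

lemma group_BS1:
  assumes "n \<ge> 1" shows "group (BS1 n)"
proof (rule groupI)
  fix x y assume "x \<in> carrier (BS1 n)" "y \<in> carrier (BS1 n)"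
  then show "x \<otimes>\<^bsub>BS1 n\<^esub> y \<in> carrier (BS1 n)"
    using assms by (cases x, cases y) (auto simp: BS1_carrier BS1_mult intro!: n_adics_add n_adics_powi_mult)
next
  show "\<one>\<^bsub>BS1 n\<^esub> \<in> carrier (BS1 n)" by (auto simp: BS1_carrier BS1_one intro: Ints_n_adics)
next
  fix x y z assume "x \<in> carrier (BS1 n)" "y \<in> carrier (BS1 n)" "z \<in> carrier (BS1 n)"
  then show "x \<otimes>\<^bsub>BS1 n\<^esub> y \<otimes>\<^bsub>BS1 n\<^esub> z = x \<otimes>\<^bsub>BS1 n\<^esub> (y \<otimes>\<^bsub>BS1 n\<^esub> z)"
    using assms by (cases x, cases y, cases z) (simp add: BS1_mult power_int_add algebra_simps)
next
  fix x assume "x \<in> carrier (BS1 n)"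
  then show "\<one>\<^bsub>BS1 n\<^esub> \<otimes>\<^bsub>BS1 n\<^esub> x = x"
    by (cases x) (simp add: BS1_mult BS1_one)
next
  fix x assume x: "x \<in> carrier (BS1 n)"
  obtain k b where kb: "x = (k, b)" by (cases x)
  have "(- k, - (of_nat n powi (- k) * b)) \<in> carrier (BS1 n)"
    using x assms by (simp add: kb BS1_carrier n_adics_uminus n_adics_powi_mult)
  moreover have "(- k, - (of_nat n powi (- k) * b)) \<otimes>\<^bsub>BS1 n\<^esub> x = \<one>\<^bsub>BS1 n\<^esub>"
    by (simp add: kb BS1_mult BS1_one)
  ultimately show "\<exists>y\<in>carrier (BS1 n). y \<otimes>\<^bsub>BS1 n\<^esub> x = \<one>\<^bsub>BS1 n\<^esub>" by blast
qed

section \<open>Group actions, geodesics and hyperbolicity\<close>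

lemma group_actionI:
  fixes G (structure) and E :: "'b set" and \<phi> :: "'a \<Rightarrow> 'b \<Rightarrow> 'b"
  assumes G: "group G"
    and closed: "\<And>g x. g \<in> carrier G \<Longrightarrow> x \<in> E \<Longrightarrow> \<phi> g x \<in> E"
    and ext: "\<And>g. g \<in> carrier G \<Longrightarrow> \<phi> g \<in> extensional E"
    and mult: "\<And>g h x. g \<in> carrier G \<Longrightarrow> h \<in> carrier G \<Longrightarrow> x \<in> E \<Longrightarrow> \<phi> (g \<otimes> h) x = \<phi> g (\<phi> h x)"
    and one: "\<And>x. x \<in> E \<Longrightarrow> \<phi> \<one> x = x"
  shows "group_action G E \<phi>"
proof -
  interpret group G by (rule G)
  have Bij: "\<phi> g \<in> Bij E" if g: "g \<in> carrier G" for g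
  proof -
    have "bij_betw (\<phi> g) E E"
      by (rule bij_betw_byWitness[where f' = "\<phi> (inv g)"])
        (use g closed mult[of "inv g" g] mult[of g "inv g"] one in auto)
    then show ?thesis using ext[OF g] by (simp add: Bij_def)
  qed
  have "\<phi> (g \<otimes> h) = \<phi> g \<otimes>\<^bsub>BijGroup E\<^esub> \<phi> h" if g: "g \<in> carrier G" and h: "h \<in> carrier G" for g h
  proof -
    have "\<phi> (g \<otimes> h) = compose E (\<phi> g) (\<phi> h)"
      by (rule extensionalityI[where A = E]) (use ext g h mult in \<open>auto simp: compose_def\<close>)
    then show ?thesis using Bij[OF g] Bij[OF h] by (simp add: BijGroup_def)
  qed
  then show ?thesis
    unfolding group_action_def group_hom_def group_hom_axioms_def
    using G group_BijGroup Bij by (auto intro!: homI simp: BijGroup_def)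
qed

text \<open>a, b, c, p, q, r are the values of a quasi-ultrametric on the six edges of a tetrahedron,
  with faces (a, b, p), (b, c, q), (a, c, r) and (p, q, r).\<close>
lemma four_point_max_inequality:
  fixes a b c p q r e :: real
  assumes "e \<ge> 0"
    "a \<le> max b p + e" "b \<le> max a p + e" "p \<le> max a b + e"
    "b \<le> max c q + e" "c \<le> max b q + e" "q \<le> max b c + e"
    "a \<le> max c r + e" "c \<le> max a r + e" "r \<le> max a c + e"
    "p \<le> max q r + e" "q \<le> max p r + e" "r \<le> max p q + e"
  shows "r + b \<le> max (p + c) (q + a) + 2 * e"
  using assms by (simp add: max_def split: if_splits; linarith)

text \<open>Up to a constant, the Gromov product (x|y)_w is A(w,x) + A(w,y) - A(x,y) - h(w), and the
  ultrametric inequality for A yields the four-point condition.\<close>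
lemma gromov_hyperbolicI:
  fixes d A :: "'a \<Rightarrow> 'a \<Rightarrow> real" and h :: "'a \<Rightarrow> real"
  assumes sym: "\<And>p q. p \<in> M \<Longrightarrow> q \<in> M \<Longrightarrow> A p q = A q p"
    and ult: "\<And>p q r. p \<in> M \<Longrightarrow> q \<in> M \<Longrightarrow> r \<in> M \<Longrightarrow> A p q \<le> max (A p r) (A r q) + e"
    and approx: "\<And>p q. p \<in> M \<Longrightarrow> q \<in> M \<Longrightarrow> \<bar>d p q - (2 * A p q - h p - h q)\<bar> \<le> c"
    and e: "e \<ge> 0"
  shows "gromov_hyperbolic M d"
  unfolding gromov_hyperbolic_def
proof (intro exI[of _ "3 * \<bar>c\<bar> + 2 * e"] conjI ballI)
  show "0 \<le> 3 * \<bar>c\<bar> + 2 * e" using e by simp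
  have product: "A w x + A w y - A x y - h w - 3 / 2 * \<bar>c\<bar> \<le> gromov_product d w x y \<and>
      gromov_product d w x y \<le> A w x + A w y - A x y - h w + 3 / 2 * \<bar>c\<bar>"
    if "w \<in> M" "x \<in> M" "y \<in> M" for w x y
    using approx[of w x] approx[of w y] approx[of x y] that abs_ge_self[of c]
    unfolding gromov_product_def by (auto simp: abs_le_iff)
  fix w x y z assume M: "w \<in> M" "x \<in> M" "y \<in> M" "z \<in> M"
  have "A x z + A w y \<le> max (A x y + A w z) (A y z + A w x) + 2 * e"
    by (rule four_point_max_inequality[OF e]) (use M in \<open>metis sym ult\<close>)+
  then show "min (gromov_product d w x y) (gromov_product d w y z) - (3 * \<bar>c\<bar> + 2 * e)
      \<le> gromov_product d w x z"
    using product[of w x y] product[of w y z] product[of w x z] M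
    by (auto simp: max_def min_def split: if_splits)
qed

lemma one_lipschitz_concat:
  fixes \<gamma> :: "real \<Rightarrow> 'a"
  assumes "Metric_space M d" "a \<le> m" "m \<le> b" "\<gamma> ` {a..b} \<subseteq> M"
    and left: "\<And>s u. s \<in> {a..m} \<Longrightarrow> u \<in> {a..m} \<Longrightarrow> d (\<gamma> s) (\<gamma> u) \<le> \<bar>s - u\<bar>"
    and right: "\<And>s u. s \<in> {m..b} \<Longrightarrow> u \<in> {m..b} \<Longrightarrow> d (\<gamma> s) (\<gamma> u) \<le> \<bar>s - u\<bar>"
    and "s \<in> {a..b}" "u \<in> {a..b}"
  shows "d (\<gamma> s) (\<gamma> u) \<le> \<bar>s - u\<bar>"
proof -
  interpret Metric_space M d by fact
  have ordered: "d (\<gamma> s) (\<gamma> u) \<le> \<bar>s - u\<bar>" if "a \<le> s" "s \<le> u" "u \<le> b" for s u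
  proof (cases "u \<le> m \<or> m \<le> s")
    case True
    then show ?thesis using left[of s u] right[of s u] that by auto
  next
    case False
    then have "d (\<gamma> s) (\<gamma> u) \<le> d (\<gamma> s) (\<gamma> m) + d (\<gamma> m) (\<gamma> u)"
      using assms that by (intro triangle) (auto simp: image_subset_iff)
    also have "\<dots> \<le> \<bar>s - m\<bar> + \<bar>m - u\<bar>"
      using left[of s m] right[of m u] False that by (intro add_mono) auto
    also have "\<dots> = \<bar>s - u\<bar>" using False that by auto
    finally show ?thesis .
  qed
  show ?thesis
    using ordered[of s u] ordered[of u s] assms(7,8) commute[of "\<gamma> s" "\<gamma> u"]
    by (cases "s \<le> u") (auto simp: abs_minus_commute)
qed

lemma geodesic_of_one_lipschitz:
  fixes \<gamma> :: "real \<Rightarrow> 'a"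
  assumes "Metric_space M d" "x \<in> M" "y \<in> M" "\<gamma> 0 = x" "\<gamma> (d x y) = y" "\<gamma> ` {0..d x y} \<subseteq> M"
    and lip: "\<And>s u. s \<in> {0..d x y} \<Longrightarrow> u \<in> {0..d x y} \<Longrightarrow> d (\<gamma> s) (\<gamma> u) \<le> \<bar>s - u\<bar>"
  shows "\<forall>s\<in>{0..d x y}. \<forall>u\<in>{0..d x y}. d (\<gamma> s) (\<gamma> u) = \<bar>s - u\<bar>"
proof -
  interpret Metric_space M d by fact
  have ordered: "d (\<gamma> s) (\<gamma> u) = \<bar>s - u\<bar>"
    if s: "s \<in> {0..d x y}" and u: "u \<in> {0..d x y}" and "s \<le> u" for s u
  proof -
    \<comment> \<open>Any shortfall on [s, u] would make the whole path shorter than d x y.\<close>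
    have "d x y \<le> d x (\<gamma> s) + d (\<gamma> s) (\<gamma> u) + d (\<gamma> u) y"
      using assms s u triangle[of x "\<gamma> s" y] triangle[of "\<gamma> s" "\<gamma> u" y] by (auto simp: image_subset_iff)
    moreover have "d x (\<gamma> s) \<le> s" "d (\<gamma> u) y \<le> d x y - u"
      using lip[of 0 s] lip[of u "d x y"] s u assms by auto
    ultimately show ?thesis using lip[OF s u] \<open>s \<le> u\<close> by linarith
  qed
  show ?thesis
    using ordered ordered[of u s for s u] commute by (metis abs_minus_commute linorder_le_cases)
qed

lemma continuous_map_to_mtopologyI:
  fixes f :: "'b::metric_space \<Rightarrow> 'a"
  assumes "Metric_space M d" "\<And>x. f x \<in> M"
    and "\<And>x e. e > 0 \<Longrightarrow> \<exists>\<delta>>0. \<forall>y. dist y x < \<delta> \<longrightarrow> d (f x) (f y) < e"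
  shows "continuous_map euclidean (Metric_space.mtopology M d) f"
proof -
  interpret Metric_space M d by fact
  show ?thesis
    unfolding continuous_map_to_metric
  proof (intro ballI allI impI)
    fix x :: 'b and e :: real assume "e > 0"
    then obtain \<delta> where "\<delta> > 0" "\<forall>y. dist y x < \<delta> \<longrightarrow> d (f x) (f y) < e" using assms(3) by blast
    then show "\<exists>U. openin euclidean U \<and> x \<in> U \<and> (\<forall>y\<in>U. f y \<in> mball (f x) e)"
      using assms(2) by (intro exI[of _ "ball x \<delta>"]) (auto simp: dist_commute)
  qed
qed

definition cocompact_hyperbolic_space ::
  "('g, 'm) monoid_scheme \<Rightarrow> 'a set \<Rightarrow> ('a \<Rightarrow> 'a \<Rightarrow> real) \<Rightarrow> ('g \<Rightarrow> 'a \<Rightarrow> 'a) \<Rightarrow> bool" where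
  "cocompact_hyperbolic_space G X d \<phi> \<longleftrightarrow> Metric_space X d \<and> unbounded_metric X d \<and>
     proper_metric X d \<and> geodesic_metric X d \<and> gromov_hyperbolic X d \<and>
     isometric_action G X d \<phi> \<and> cocompact_action G X d \<phi>"

lemma PPH_of_two_factors:
  fixes X0 X1 :: "(real \<times> real) set" and \<phi>0 \<phi>1 :: "'g \<Rightarrow> real \<times> real \<Rightarrow> real \<times> real"
  assumes "cocompact_hyperbolic_space G X0 d0 \<phi>0" "cocompact_hyperbolic_space G X1 d1 \<phi>1"
    and finite: "\<And>z0 z1 r. z0 \<in> X0 \<Longrightarrow> z1 \<in> X1 \<Longrightarrow>
      finite {g \<in> carrier G. d0 z0 (\<phi>0 g z0) + d1 z1 (\<phi>1 g z1) \<le> r}"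
  shows "PPH G"
proof -
  define X where "X = (\<lambda>i::nat. if i = 0 then X0 else X1)"
  define d where "d = (\<lambda>i::nat. if i = 0 then d0 else d1)"
  define \<phi> where "\<phi> = (\<lambda>i::nat. if i = 0 then \<phi>0 else \<phi>1)"
  have "cocompact_hyperbolic_space G (X i) (d i) (\<phi> i)" for i
    using assms by (simp add: X_def d_def \<phi>_def)
  moreover have "proper_action G (PiE {..<2} X) (l1_dist 2 d) (diag_action 2 \<phi>)"
    unfolding proper_action_def
  proof (intro ballI allI impI)
    fix z r assume "z \<in> PiE {..<2} X"
    then have "z 0 \<in> X0" "z 1 \<in> X1"
      using PiE_mem[of z "{..<2}" X 0] PiE_mem[of z "{..<2}" X 1] by (simp_all add: X_def)
    moreover have "l1_dist 2 d z (diag_action 2 \<phi> g z) = d0 (z 0) (\<phi>0 g (z 0)) + d1 (z 1) (\<phi>1 g (z 1))" for g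
      by (simp add: l1_dist_def diag_action_def numeral_2_eq_2 d_def \<phi>_def)
    ultimately show "finite {g \<in> carrier G. l1_dist 2 d z (diag_action 2 \<phi> g z) \<le> r}"
      using finite by presburger
  qed
  ultimately show ?thesis
    unfolding PPH_def cocompact_hyperbolic_space_def by blast
qed

section \<open>The Bass--Serre tree\<close>

text \<open>A point (h, r) of the tree has height h and lies on the branch of
  r \<in> \<int>[1/n], which is only determined modulo n^-\<lfloor>h\<rfloor> \<int> and is normalised by
  0 \<le> r n^\<lfloor>h\<rfloor> < 1. Branches whose difference is q meet exactly at the heights m
  with q n^\<lfloor>m\<rfloor> \<in> \<int>, so the distance of two points is the length of the path up to
  the lowest common height and down again.\<close>

definition merged :: "nat \<Rightarrow> real \<Rightarrow> real \<Rightarrow> bool" where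
  "merged n q m \<longleftrightarrow> q * real n powi \<lfloor>m\<rfloor> \<in> \<int>"

text \<open>The least height m \<ge> M at which q is merged; it exists only for q \<in> \<int>[1/n].\<close>
definition merge_height :: "nat \<Rightarrow> real \<Rightarrow> real \<Rightarrow> real" where
  "merge_height n M q = (SOME m0. \<forall>m. (M \<le> m \<and> merged n q m) \<longleftrightarrow> m0 \<le> m)"

definition tree_rep :: "nat \<Rightarrow> real \<Rightarrow> real \<Rightarrow> real" where
  "tree_rep n h z = frac (z * real n powi \<lfloor>h\<rfloor>) / real n powi \<lfloor>h\<rfloor>"

definition tree :: "nat \<Rightarrow> (real \<times> real) set" where
  "tree n = {p. snd p \<in> n_adics n \<and> 0 \<le> snd p * real n powi \<lfloor>fst p\<rfloor> \<and> snd p * real n powi \<lfloor>fst p\<rfloor> < 1}"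

definition tree_dist :: "nat \<Rightarrow> real \<times> real \<Rightarrow> real \<times> real \<Rightarrow> real" where
  "tree_dist n p q = (if p \<in> tree n \<and> q \<in> tree n
     then 2 * merge_height n (max (fst p) (fst q)) (snd p - snd q) - fst p - fst q else 0)"

definition tree_point :: "nat \<Rightarrow> real \<Rightarrow> real \<Rightarrow> real \<times> real" where
  "tree_point n s u = (u, tree_rep n u s)"

lemma merged_mono:
  assumes "n \<ge> 1" "merged n q m" "m \<le> m'" shows "merged n q m'"
proof -
  define t where "t = nat (\<lfloor>m'\<rfloor> - \<lfloor>m\<rfloor>)"
  have t: "\<lfloor>m'\<rfloor> = \<lfloor>m\<rfloor> + int t" using floor_mono[OF assms(3)] by (simp add: t_def)
  have "q * real n powi \<lfloor>m'\<rfloor> = (q * real n powi \<lfloor>m\<rfloor>) * real n ^ t"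
    using assms(1) by (simp add: t power_int_add)
  also have "\<dots> \<in> \<int>" using assms(2) unfolding merged_def by (metis Ints_mult Ints_power Ints_of_nat)
  finally show ?thesis by (simp add: merged_def)
qed

lemma merged_add: "merged n q m \<Longrightarrow> merged n q' m \<Longrightarrow> merged n (q + q') m"
  by (simp add: merged_def distrib_right Ints_add)

lemma merged_uminus [simp]: "merged n (- q) m \<longleftrightarrow> merged n q m"
  by (simp add: merged_def)

lemma merged_diff: "merged n q m \<Longrightarrow> merged n q' m \<Longrightarrow> merged n (q - q') m"
  using merged_add[of n q m "- q'"] by simp

lemma merged_zero [simp]: "merged n 0 m"
  by (simp add: merged_def)

lemma merged_powi_mult_iff:
  assumes "n \<ge> 1" shows "merged n (real n powi k * q) m \<longleftrightarrow> merged n q (m + of_int k)"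
proof -
  have "real n powi (\<lfloor>m\<rfloor> + k) = real n powi \<lfloor>m\<rfloor> * real n powi k"
    by (rule power_int_add) (use assms in simp)
  then have "real n powi k * q * real n powi \<lfloor>m\<rfloor> = q * real n powi \<lfloor>m + of_int k\<rfloor>"
    by (simp add: mult_ac)
  then show ?thesis by (simp only: merged_def)
qed

lemma int_set_has_least:
  fixes S :: "int set"
  assumes "s \<in> S" and bound: "\<And>x. x \<in> S \<Longrightarrow> b \<le> x"
  shows "\<exists>k\<in>S. \<forall>x\<in>S. k \<le> x"
proof -
  define k where "k = Min (S \<inter> {b..s})"
  have k: "k \<in> S \<inter> {b..s}" using assms unfolding k_def by (intro Min_in) auto
  have "k \<le> x" if "x \<in> S" for x
  proof (cases "x \<le> s")
    case True
    then show ?thesis using that bound unfolding k_def by (intro Min_le) auto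
  next
    case False
    then show ?thesis using k by auto
  qed
  then show ?thesis using k by blast
qed

text \<open>Merging is upward closed and depends only on \<lfloor>m\<rfloor>; since q \<in> \<int>[1/n] merges at some
  height, the heights above M where q is merged form a closed half-line.\<close>
lemma merge_height_exists:
  assumes n: "n \<ge> 1" and q: "q \<in> n_adics n"
  shows "\<exists>m0. \<forall>m. (M \<le> m \<and> merged n q m) \<longleftrightarrow> m0 \<le> m"
proof (cases "\<forall>m. merged n q m")
  case True
  then show ?thesis by (intro exI[of _ M]) auto
next
  case False
  then obtain m1 where m1: "\<not> merged n q m1" by blast
  define S where "S = {k::int. merged n q (of_int k)}"
  have floor: "merged n q m \<longleftrightarrow> \<lfloor>m\<rfloor> \<in> S" for m by (simp add: S_def merged_def)
  obtain j :: nat where "q * real n ^ j \<in> \<int>" using q by (auto simp: n_adics_def)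
  then have "int j \<in> S" by (simp add: S_def merged_def)
  moreover have "\<lfloor>m1\<rfloor> \<le> k" if "k \<in> S" for k
  proof -
    have "m1 < of_int k" using that m1 merged_mono[OF n, of q "of_int k" m1] unfolding S_def by force
    then show ?thesis using floor_less_iff[of m1 k] by simp
  qed
  ultimately obtain K where K: "K \<in> S" "\<And>x. x \<in> S \<Longrightarrow> K \<le> x"
    using int_set_has_least by meson
  have "merged n q m \<longleftrightarrow> of_int K \<le> m" for m
  proof
    assume "merged n q m"
    then have "K \<le> \<lfloor>m\<rfloor>" using K(2) floor by blast
    then show "of_int K \<le> m" by (simp add: le_floor_iff)
  next
    assume "of_int K \<le> m"
    then show "merged n q m" using K(1) merged_mono[OF n] unfolding S_def by blast
  qed
  then show ?thesis by (intro exI[of _ "max M (of_int K)"]) auto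
qed

lemma merge_height_iff:
  assumes "n \<ge> 1" "q \<in> n_adics n"
  shows "merge_height n M q \<le> m \<longleftrightarrow> M \<le> m \<and> merged n q m"
  using someI_ex[OF merge_height_exists[OF assms, of M]] unfolding merge_height_def by blast

lemma merge_height_ge: "n \<ge> 1 \<Longrightarrow> q \<in> n_adics n \<Longrightarrow> M \<le> merge_height n M q"
  using merge_height_iff by blast

lemma merged_merge_height: "n \<ge> 1 \<Longrightarrow> q \<in> n_adics n \<Longrightarrow> merged n q (merge_height n M q)"
  using merge_height_iff by blast

lemma merge_height_le: "n \<ge> 1 \<Longrightarrow> q \<in> n_adics n \<Longrightarrow> M \<le> m \<Longrightarrow> merged n q m \<Longrightarrow> merge_height n M q \<le> m"
  using merge_height_iff by blast

lemma merge_height_eq_self: "n \<ge> 1 \<Longrightarrow> q \<in> n_adics n \<Longrightarrow> merged n q M \<Longrightarrow> merge_height n M q = M"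
  by (meson merge_height_ge merge_height_le order_antisym order_refl)

lemma merge_height_uminus [simp]: "merge_height n M (- q) = merge_height n M q"
  by (simp add: merge_height_def)

lemma merge_height_add_merged:
  assumes n: "n \<ge> 1" and "q \<in> n_adics n" "e \<in> n_adics n" "merged n e M"
  shows "merge_height n M (q + e) = merge_height n M q"
proof -
  have "merge_height n M (q + e) \<le> m \<longleftrightarrow> merge_height n M q \<le> m" for m
    using assms merged_mono[OF n, of e M m] merged_add[of n q m e] merged_diff[of n "q + e" m e]
    by (auto simp: merge_height_iff n_adics_add)
  then show ?thesis by (meson order_antisym order_refl)
qed

lemma merge_height_powi_mult:
  assumes n: "n \<ge> 1" and q: "q \<in> n_adics n"
  shows "merge_height n (M - of_int k) (real n powi k * q) = merge_height n M q - of_int k"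
proof -
  have q': "real n powi k * q \<in> n_adics n" using n_adics_powi_mult[OF n q] by simp
  have "merge_height n (M - of_int k) (real n powi k * q) \<le> m \<longleftrightarrow> merge_height n M q - of_int k \<le> m" for m
    using merge_height_iff[OF n q', of "M - of_int k" m] merge_height_iff[OF n q, of M "m + of_int k"]
    by (auto simp: merged_powi_mult_iff[OF n])
  then show ?thesis by (meson order_antisym order_refl)
qed

lemma merge_height_ultra:
  assumes n: "n \<ge> 1" and "p \<in> n_adics n" "q \<in> n_adics n" "r \<in> n_adics n"
  shows "merge_height n (max a c) (p - r) \<le>
    max (merge_height n (max a b) (p - q)) (merge_height n (max b c) (q - r))"
proof -
  let ?J = "max (merge_height n (max a b) (p - q)) (merge_height n (max b c) (q - r))"
  have Z: "p - q \<in> n_adics n" "q - r \<in> n_adics n" "p - r \<in> n_adics n"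
    using assms by (auto intro: n_adics_diff)
  have "merged n (p - q) ?J"
    by (rule merged_mono[OF n merged_merge_height[OF n Z(1), of "max a b"]]) simp
  moreover have "merged n (q - r) ?J"
    by (rule merged_mono[OF n merged_merge_height[OF n Z(2), of "max b c"]]) simp
  ultimately have "merged n (p - r) ?J" using merged_add by fastforce
  moreover have "max a c \<le> ?J"
    using merge_height_ge[OF n Z(1), of "max a b"] merge_height_ge[OF n Z(2), of "max b c"]
    by (auto simp: max_def split: if_splits)
  ultimately show ?thesis by (intro merge_height_le[OF n Z(3)])
qed

lemma tree_rep_merged: assumes "n \<ge> 1" shows "merged n (tree_rep n h z - z) h"
proof -
  have "(tree_rep n h z - z) * real n powi \<lfloor>h\<rfloor> = frac (z * real n powi \<lfloor>h\<rfloor>) - z * real n powi \<lfloor>h\<rfloor>"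
    using assms by (simp add: tree_rep_def field_simps)
  also have "\<dots> = - of_int \<lfloor>z * real n powi \<lfloor>h\<rfloor>\<rfloor>" by (simp add: frac_def)
  finally show ?thesis by (simp add: merged_def)
qed

lemma tree_rep_cong: assumes "merged n (z1 - z2) h" shows "tree_rep n h z1 = tree_rep n h z2"
proof -
  obtain k where "(z1 - z2) * real n powi \<lfloor>h\<rfloor> = of_int k"
    using assms by (auto simp: merged_def elim: Ints_cases)
  then have "z1 * real n powi \<lfloor>h\<rfloor> = z2 * real n powi \<lfloor>h\<rfloor> + of_int k" by (simp add: algebra_simps)
  then show ?thesis by (simp add: tree_rep_def frac_add_of_int_right)
qed

lemma tree_rep_n_adics:
  assumes n: "n \<ge> 1" and z: "z \<in> n_adics n" shows "tree_rep n h z \<in> n_adics n"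
proof -
  have "tree_rep n h z = z + real n powi (- \<lfloor>h\<rfloor>) * (- of_int \<lfloor>z * real n powi \<lfloor>h\<rfloor>\<rfloor>)"
    using n by (simp add: tree_rep_def frac_def field_simps power_int_minus)
  also have "\<dots> \<in> n_adics n"
    by (intro n_adics_add[OF z] n_adics_powi_mult[OF n, of _ "- \<lfloor>h\<rfloor>", simplified] Ints_n_adics) simp
  finally show ?thesis .
qed

lemma tree_point_in_tree: "n \<ge> 1 \<Longrightarrow> s \<in> n_adics n \<Longrightarrow> tree_point n s u \<in> tree n"
  by (simp add: tree_point_def tree_def tree_rep_n_adics) (simp add: tree_rep_def frac_lt_1)

lemma tree_point_self: "n \<ge> 1 \<Longrightarrow> p \<in> tree n \<Longrightarrow> tree_point n (snd p) (fst p) = p"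
  by (cases p) (simp add: tree_point_def tree_def tree_rep_def frac_eq)

lemma tree_point_cong: "merged n (s - s') u \<Longrightarrow> tree_point n s u = tree_point n s' u"
  by (simp add: tree_point_def tree_rep_cong)

lemma tree_dist_tree_point:
  assumes n: "n \<ge> 1" and "s \<in> n_adics n" "s' \<in> n_adics n"
  shows "tree_dist n (tree_point n s u) (tree_point n s' u') = 2 * merge_height n (max u u') (s - s') - u - u'"
proof -
  define e where "e = (tree_rep n u s - s) - (tree_rep n u' s' - s')"
  have "merged n (tree_rep n u s - s) (max u u')" "merged n (tree_rep n u' s' - s') (max u u')"
    using merged_mono[OF n tree_rep_merged[OF n]] by auto
  then have "merged n e (max u u')" unfolding e_def by (rule merged_diff)
  moreover have "e \<in> n_adics n"
    using assms by (auto simp: e_def intro!: n_adics_diff tree_rep_n_adics)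
  moreover have "tree_rep n u s - tree_rep n u' s' = (s - s') + e" by (simp add: e_def)
  ultimately show ?thesis
    using assms tree_point_in_tree[OF n]
    by (simp add: tree_dist_def tree_point_def merge_height_add_merged n_adics_diff)
qed

lemma tree_dist_same_branch:
  assumes "n \<ge> 1" "s \<in> n_adics n"
  shows "tree_dist n (tree_point n s u) (tree_point n s v) = \<bar>u - v\<bar>"
  using assms by (simp add: tree_dist_tree_point merge_height_eq_self Ints_n_adics max_def)

lemma tree_dist_eq:
  "p \<in> tree n \<Longrightarrow> q \<in> tree n \<Longrightarrow>
    tree_dist n p q = 2 * merge_height n (max (fst p) (fst q)) (snd p - snd q) - fst p - fst q"
  by (simp add: tree_dist_def)

lemma tree_n_adics: "p \<in> tree n \<Longrightarrow> snd p \<in> n_adics n"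
  by (simp add: tree_def)

lemma tree_dist_eq_0_imp_eq:
  assumes n: "n \<ge> 1" and T: "x \<in> tree n" "y \<in> tree n" and "tree_dist n x y = 0"
  shows "x = y"
proof -
  have Z: "snd x - snd y \<in> n_adics n" using T by (auto intro!: n_adics_diff tree_n_adics)
  have J: "2 * merge_height n (max (fst x) (fst y)) (snd x - snd y) = fst x + fst y"
    using assms by (simp add: tree_dist_def)
  have "max (fst x) (fst y) \<le> merge_height n (max (fst x) (fst y)) (snd x - snd y)"
    by (rule merge_height_ge[OF n Z])
  then have h: "fst x = fst y" "merge_height n (max (fst x) (fst y)) (snd x - snd y) = fst x"
    using J by linarith+
  then have "(snd x - snd y) * real n powi \<lfloor>fst x\<rfloor> \<in> \<int>"
    using merged_merge_height[OF n Z, of "max (fst x) (fst y)"] by (simp add: merged_def)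
  moreover have "\<bar>(snd x - snd y) * real n powi \<lfloor>fst x\<rfloor>\<bar> < 1"
    using T h by (auto simp: tree_def left_diff_distrib)
  ultimately have "(snd x - snd y) * real n powi \<lfloor>fst x\<rfloor> = 0"
    by (rule Ints_nonzero_abs_less1)
  then show "x = y" using h n by (simp add: prod_eq_iff)
qed

lemma tree_dist_triangle:
  assumes n: "n \<ge> 1" and T: "x \<in> tree n" "y \<in> tree n" "z \<in> tree n"
  shows "tree_dist n x z \<le> tree_dist n x y + tree_dist n y z"
proof -
  note Z = tree_n_adics[OF T(1)] tree_n_adics[OF T(2)] tree_n_adics[OF T(3)]
  define Axy where "Axy = merge_height n (max (fst x) (fst y)) (snd x - snd y)"
  define Ayz where "Ayz = merge_height n (max (fst y) (fst z)) (snd y - snd z)"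
  define Axz where "Axz = merge_height n (max (fst x) (fst z)) (snd x - snd z)"
  have "Axz \<le> Axy \<or> Axz \<le> Ayz"
    using merge_height_ultra[OF n Z, where a = "fst x" and b = "fst y" and c = "fst z"]
    by (auto simp: Axy_def Ayz_def Axz_def)
  moreover have "fst y \<le> Axy" "fst y \<le> Ayz"
    unfolding Axy_def Ayz_def
    by (rule order_trans[OF max.cobounded2 merge_height_ge[OF n n_adics_diff[OF Z(1) Z(2)]]],
        rule order_trans[OF max.cobounded1 merge_height_ge[OF n n_adics_diff[OF Z(2) Z(3)]]])
  moreover have "tree_dist n x z = 2 * Axz - fst x - fst z" "tree_dist n x y = 2 * Axy - fst x - fst y"
    "tree_dist n y z = 2 * Ayz - fst y - fst z"
    using T by (simp_all add: tree_dist_eq Axy_def Ayz_def Axz_def)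
  ultimately show ?thesis by linarith
qed

lemma metric_tree: assumes n: "n \<ge> 1" shows "Metric_space (tree n) (tree_dist n)"
proof
  fix x y
  show "0 \<le> tree_dist n x y"
    using merge_height_ge[OF n n_adics_diff[OF tree_n_adics tree_n_adics], of x y "max (fst x) (fst y)"]
    by (auto simp: tree_dist_def)
  show "tree_dist n x y = tree_dist n y x"
    using merge_height_uminus[of n _ "snd x - snd y"] by (simp add: tree_dist_def max.commute)
next
  fix x y assume T: "x \<in> tree n" "y \<in> tree n"
  show "tree_dist n x y = 0 \<longleftrightarrow> x = y"
  proof
    show "tree_dist n x y = 0 \<Longrightarrow> x = y" by (rule tree_dist_eq_0_imp_eq[OF n T])
    show "x = y \<Longrightarrow> tree_dist n x y = 0"
      using T n by (simp add: tree_dist_def merge_height_eq_self Ints_n_adics)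
  qed
qed (rule tree_dist_triangle[OF n])

lemma gromov_hyperbolic_tree: assumes n: "n \<ge> 1" shows "gromov_hyperbolic (tree n) (tree_dist n)"
proof (rule gromov_hyperbolicI[where A = "\<lambda>p q. merge_height n (max (fst p) (fst q)) (snd p - snd q)"
      and h = fst and e = 0 and c = 0])
  fix p q assume "p \<in> tree n" "q \<in> tree n"
  then show "\<bar>tree_dist n p q - (2 * merge_height n (max (fst p) (fst q)) (snd p - snd q) - fst p - fst q)\<bar> \<le> 0"
    by (simp add: tree_dist_def)
  show "merge_height n (max (fst p) (fst q)) (snd p - snd q) = merge_height n (max (fst q) (fst p)) (snd q - snd p)"
    using merge_height_uminus[of n _ "snd p - snd q"] by (simp add: max.commute)
next
  fix p q r assume "p \<in> tree n" "q \<in> tree n" "r \<in> tree n"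
  then show "merge_height n (max (fst p) (fst q)) (snd p - snd q) \<le>
      max (merge_height n (max (fst p) (fst r)) (snd p - snd r))
        (merge_height n (max (fst r) (fst q)) (snd r - snd q)) + 0"
    using merge_height_ultra[OF n tree_n_adics tree_n_adics tree_n_adics] by simp
qed simp

lemma geodesic_tree: assumes n: "n \<ge> 1" shows "geodesic_metric (tree n) (tree_dist n)"
  unfolding geodesic_metric_def
proof (intro ballI)
  fix x y assume x: "x \<in> tree n" and y: "y \<in> tree n"
  obtain hx rx hy ry where xy: "x = (hx, rx)" "y = (hy, ry)" by fastforce
  have r: "rx \<in> n_adics n" "ry \<in> n_adics n" using x y xy tree_n_adics by fastforce+
  have Z: "rx - ry \<in> n_adics n" using r by (rule n_adics_diff)
  define m where "m = merge_height n (max hx hy) (rx - ry)"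
  define L where "L = tree_dist n x y"
  define s1 where "s1 = m - hx"
  have L: "L = 2 * m - hx - hy" using x y by (simp add: L_def tree_dist_def xy m_def)
  have s1: "0 \<le> s1" "s1 \<le> L" using merge_height_ge[OF n Z, of "max hx hy"] by (auto simp: s1_def L m_def)
  define \<gamma> where "\<gamma> = (\<lambda>s. if s \<le> s1 then tree_point n rx (hx + s) else tree_point n ry (2 * m - hx - s))"
  have up: "\<gamma> s = tree_point n rx (hx + s)" if "s \<in> {0..s1}" for s
    using that by (auto simp: \<gamma>_def)
  have down: "\<gamma> s = tree_point n ry (2 * m - hx - s)" if "s \<in> {s1..L}" for s
    using that tree_point_cong[OF merged_merge_height[OF n Z]] by (auto simp: \<gamma>_def s1_def m_def)
  have M: "Metric_space (tree n) (tree_dist n)" by (rule metric_tree[OF n])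
  have img: "\<gamma> ` {0..L} \<subseteq> tree n"
    using tree_point_in_tree[OF n r(1)] tree_point_in_tree[OF n r(2)] by (auto simp: \<gamma>_def)
  have ends: "\<gamma> 0 = x" "\<gamma> L = y"
    using up[of 0] down[of L] s1 tree_point_self[OF n x] tree_point_self[OF n y] by (simp_all add: xy L)
  have "tree_dist n (\<gamma> s) (\<gamma> u) \<le> \<bar>s - u\<bar>" if "s \<in> {0..L}" "u \<in> {0..L}" for s u
    by (rule one_lipschitz_concat[OF M s1 img _ _ that])
      (simp_all add: up down tree_dist_same_branch[OF n] r abs_minus_commute)
  then show "\<exists>\<gamma>. \<gamma> 0 = x \<and> \<gamma> (tree_dist n x y) = y \<and> \<gamma> ` {0..tree_dist n x y} \<subseteq> tree n \<and>
      (\<forall>s\<in>{0..tree_dist n x y}. \<forall>u\<in>{0..tree_dist n x y}. tree_dist n (\<gamma> s) (\<gamma> u) = \<bar>s - u\<bar>)"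
    using geodesic_of_one_lipschitz[OF M x y, of \<gamma>] ends img unfolding L_def by blast
qed

definition tree_action :: "nat \<Rightarrow> int \<times> rat \<Rightarrow> real \<times> real \<Rightarrow> real \<times> real" where
  "tree_action n g p = (if p \<in> tree n
     then tree_point n (of_rat (snd g) + real n powi fst g * snd p) (fst p - of_int (fst g))
     else undefined)"

lemma tree_action_tree_point:
  assumes n: "n \<ge> 1" and s: "s \<in> n_adics n"
  shows "tree_action n (k, b) (tree_point n s u) = tree_point n (of_rat b + real n powi k * s) (u - of_int k)"
proof -
  have "tree_action n (k, b) (tree_point n s u) = tree_point n (of_rat b + real n powi k * tree_rep n u s) (u - of_int k)"
    using tree_point_in_tree[OF n s] by (simp add: tree_action_def) (simp add: tree_point_def)
  also have "\<dots> = tree_point n (of_rat b + real n powi k * s) (u - of_int k)"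
  proof (rule tree_point_cong)
    have "merged n (real n powi k * (tree_rep n u s - s)) (u - of_int k)"
      using tree_rep_merged[OF n] by (simp add: merged_powi_mult_iff[OF n])
    then show "merged n (of_rat b + real n powi k * tree_rep n u s - (of_rat b + real n powi k * s)) (u - of_int k)"
      by (simp add: algebra_simps)
  qed
  finally show ?thesis .
qed

lemma tree_action_in_tree:
  assumes n: "n \<ge> 1" and g: "g \<in> carrier (BS1 n)" and p: "p \<in> tree n"
  shows "tree_action n g p \<in> tree n"
proof -
  have "of_rat (snd g) + real n powi fst g * snd p \<in> n_adics n"
    using of_rat_BS1_n_adics[OF n g] n_adics_powi_mult[OF n tree_n_adics[OF p]] by (simp add: n_adics_add)
  then show ?thesis using p by (simp add: tree_action_def tree_point_in_tree[OF n])
qed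

lemma tree_point_exists: "n \<ge> 1 \<Longrightarrow> p \<in> tree n \<Longrightarrow> \<exists>x r. p = tree_point n r x \<and> r \<in> n_adics n"
  using tree_point_self tree_n_adics by metis

lemma group_action_tree:
  assumes n: "n \<ge> 1" shows "group_action (BS1 n) (tree n) (tree_action n)"
proof (rule group_actionI[OF group_BS1[OF n]])
  fix g h p assume g: "g \<in> carrier (BS1 n)" and h: "h \<in> carrier (BS1 n)" and "p \<in> tree n"
  then obtain x r where p: "p = tree_point n r x" and r: "r \<in> n_adics n" using tree_point_exists[OF n] by blast
  obtain k b k' b' where gh: "g = (k, b)" "h = (k', b')" by fastforce
  have b': "of_rat b' \<in> (n_adics n :: real set)" using of_rat_BS1_n_adics[OF n h] by (simp add: gh)
  have "tree_action n g (tree_action n h p)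
      = tree_point n (of_rat b + real n powi k * (of_rat b' + real n powi k' * r)) (x - of_int k' - of_int k)"
    using b' r n by (simp add: p gh tree_action_tree_point n_adics_add n_adics_powi_mult)
  also have "\<dots> = tree_action n (g \<otimes>\<^bsub>BS1 n\<^esub> h) p"
    using r n by (simp add: p gh BS1_mult tree_action_tree_point of_rat_add of_rat_mult of_rat_powi
        power_int_add algebra_simps)
  finally show "tree_action n (g \<otimes>\<^bsub>BS1 n\<^esub> h) p = tree_action n g (tree_action n h p)" ..
next
  fix p assume "p \<in> tree n"
  then obtain x r where p: "p = tree_point n r x" and r: "r \<in> n_adics n" using tree_point_exists[OF n] by blast
  show "tree_action n \<one>\<^bsub>BS1 n\<^esub> p = p"
    using r n by (simp add: p BS1_one tree_action_tree_point)
next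
  show "tree_action n g p \<in> tree n" if "g \<in> carrier (BS1 n)" "p \<in> tree n" for g p
    using tree_action_in_tree[OF n that] .
  show "tree_action n g \<in> extensional (tree n)" for g
    by (simp add: tree_action_def extensional_def)
qed

lemma tree_action_isometry:
  assumes n: "n \<ge> 1" and g: "g \<in> carrier (BS1 n)" and pq: "p \<in> tree n" "q \<in> tree n"
  shows "tree_dist n (tree_action n g p) (tree_action n g q) = tree_dist n p q"
proof -
  obtain k b where gk: "g = (k, b)" by fastforce
  have b: "of_rat b \<in> (n_adics n :: real set)" using of_rat_BS1_n_adics[OF n g] by (simp add: gk)
  have Z: "snd p - snd q \<in> n_adics n" "snd p \<in> n_adics n" "snd q \<in> n_adics n"
    using pq by (auto intro: n_adics_diff tree_n_adics)
  define zp where "zp = of_rat b + real n powi k * snd p"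
  define zq where "zq = of_rat b + real n powi k * snd q"
  have zZ: "zp \<in> n_adics n" "zq \<in> n_adics n"
    using b Z n by (simp_all add: zp_def zq_def n_adics_add n_adics_powi_mult)
  have "tree_action n g p = tree_point n zp (fst p - of_int k)" "tree_action n g q = tree_point n zq (fst q - of_int k)"
    using pq by (simp_all add: tree_action_def gk zp_def zq_def)
  then have "tree_dist n (tree_action n g p) (tree_action n g q)
      = 2 * merge_height n (max (fst p - of_int k) (fst q - of_int k)) (zp - zq) - (fst p - of_int k) - (fst q - of_int k)"
    by (simp add: tree_dist_tree_point[OF n zZ])
  moreover have "zp - zq = real n powi k * (snd p - snd q)" by (simp add: zp_def zq_def algebra_simps)
  moreover have "max (fst p - of_int k) (fst q - of_int k) = max (fst p) (fst q) - of_int k" by (simp add: max_def)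
  ultimately have "tree_dist n (tree_action n g p) (tree_action n g q)
      = 2 * merge_height n (max (fst p) (fst q) - of_int k) (real n powi k * (snd p - snd q))
        - (fst p - of_int k) - (fst q - of_int k)"
    by simp
  also have "\<dots> = tree_dist n p q"
    using pq by (simp add: merge_height_powi_mult[OF n Z(1)] tree_dist_eq)
  finally show ?thesis .
qed

lemma isometric_action_tree:
  "n \<ge> 1 \<Longrightarrow> isometric_action (BS1 n) (tree n) (tree_dist n) (tree_action n)"
  by (simp add: isometric_action_def group_action_tree tree_action_isometry)

lemma height_diff_le_tree_dist:
  assumes n: "n \<ge> 1" and "p \<in> tree n" "q \<in> tree n"
  shows "\<bar>fst p - fst q\<bar> \<le> tree_dist n p q"
  using merge_height_ge[OF n n_adics_diff[OF tree_n_adics tree_n_adics], of p q "max (fst p) (fst q)"] assms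
  by (simp add: tree_dist_def max_def abs_if split: if_splits)

lemma continuous_tree_point:
  assumes n: "n \<ge> 1" and s: "s \<in> n_adics n"
  shows "continuous_map euclidean (Metric_space.mtopology (tree n) (tree_dist n)) (tree_point n s)"
proof (rule continuous_map_to_mtopologyI[OF metric_tree[OF n]])
  show "tree_point n s x \<in> tree n" for x by (rule tree_point_in_tree[OF n s])
  fix x e :: real assume "e > 0"
  then show "\<exists>\<delta>>0. \<forall>y. dist y x < \<delta> \<longrightarrow> tree_dist n (tree_point n s x) (tree_point n s y) < e"
    by (intro exI[of _ e]) (auto simp: tree_dist_same_branch[OF n s] dist_real_def abs_minus_commute)
qed

lemma finite_merged_bounded:
  assumes n: "n \<ge> 1" shows "finite {s. merged n (a - s) m \<and> \<bar>s\<bar> \<le> B}"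
proof -
  define c where "c = real n powi \<lfloor>m\<rfloor>"
  have c: "c > 0" using n by (simp add: c_def)
  let ?f = "\<lambda>s. (a - s) * c"
  have "inj_on ?f {s. merged n (a - s) m \<and> \<bar>s\<bar> \<le> B}" using c by (auto intro: inj_onI)
  moreover have "?f ` {s. merged n (a - s) m \<and> \<bar>s\<bar> \<le> B} \<subseteq> {k \<in> \<int>. \<bar>k\<bar> \<le> (\<bar>a\<bar> + B) * c}"
    using c by (auto simp: merged_def c_def abs_mult intro!: mult_right_mono)
  then have "finite (?f ` {s. merged n (a - s) m \<and> \<bar>s\<bar> \<le> B})"
    by (rule finite_subset) (rule finite_abs_int_segment)
  ultimately show ?thesis by (rule finite_imageD[rotated])
qed

lemma proper_tree: assumes n: "n \<ge> 1" shows "proper_metric (tree n) (tree_dist n)"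
  unfolding proper_metric_def
proof (intro ballI allI)
  interpret Metric_space "tree n" "tree_dist n" by (rule metric_tree[OF n])
  fix p \<rho> assume p: "p \<in> tree n"
  \<comment> \<open>Points within \<rho> of p have height within \<rho> of that of p and lie on one of the finitely
    many branches that merge with the branch of p below height fst p + \<rho>.\<close>
  define F where "F = {s \<in> n_adics n. merged n (snd p - s) (fst p + \<rho>) \<and> \<bar>s\<bar> \<le> real n powi (- \<lfloor>fst p - \<rho>\<rfloor>)}"
  define K where "K = (\<Union>s\<in>F. tree_point n s ` {fst p - \<rho>..fst p + \<rho>})"
  have "finite F"
    using finite_merged_bounded[OF n] by (rule finite_subset[rotated]) (auto simp: F_def)
  then have "compactin mtopology K"
    unfolding K_def
    by (intro compactin_Union finite_imageI)
      (auto simp: F_def intro!: image_compactin[OF _ continuous_tree_point[OF n]])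
  moreover have "mcball p \<rho> \<subseteq> K"
  proof
    fix q assume "q \<in> mcball p \<rho>"
    then have q: "q \<in> tree n" and dq: "tree_dist n p q \<le> \<rho>" by auto
    have Z: "snd p - snd q \<in> n_adics n" using p q by (auto intro: n_adics_diff tree_n_adics)
    have h: "\<bar>fst p - fst q\<bar> \<le> \<rho>" using height_diff_le_tree_dist[OF n p q] dq by linarith
    then have "merge_height n (max (fst p) (fst q)) (snd p - snd q) \<le> fst p + \<rho>"
      using dq p q by (simp add: tree_dist_eq abs_le_iff)
    then have "merged n (snd p - snd q) (fst p + \<rho>)" by (simp add: merge_height_iff[OF n Z])
    moreover have "\<bar>snd q\<bar> \<le> real n powi (- \<lfloor>fst p - \<rho>\<rfloor>)"
    proof -
      have "0 < real n powi \<lfloor>fst q\<rfloor>" using n by simp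
      then have "0 \<le> snd q" "snd q * real n powi \<lfloor>fst q\<rfloor> < 1" using q by (auto simp: tree_def zero_le_mult_iff)
      then have "\<bar>snd q\<bar> \<le> real n powi (- \<lfloor>fst q\<rfloor>)" using n by (simp add: power_int_minus field_simps)
      also have "\<dots> \<le> real n powi (- \<lfloor>fst p - \<rho>\<rfloor>)"
        using h n by (intro power_int_increasing) (auto intro!: floor_mono)
      finally show ?thesis .
    qed
    ultimately have "snd q \<in> F" using tree_n_adics[OF q] by (simp add: F_def)
    then show "q \<in> K"
      using tree_point_self[OF n q] h unfolding K_def
      by (intro UN_I[of "snd q"] image_eqI[of q _ "fst q"]) (auto simp: abs_le_iff)
  qed
  ultimately show "compactin mtopology (mcball p \<rho>)" by (rule closed_compactin) simp
qed

lemma unbounded_tree: assumes n: "n \<ge> 1" shows "unbounded_metric (tree n) (tree_dist n)"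
  unfolding unbounded_metric_def
proof (intro conjI ballI allI)
  fix x B assume x: "x \<in> tree n"
  let ?y = "tree_point n (snd x) (fst x + \<bar>B\<bar> + 1)"
  have "tree_dist n x ?y = \<bar>B\<bar> + 1"
    using tree_dist_same_branch[OF n tree_n_adics[OF x], of "fst x"] tree_point_self[OF n x] by simp
  then show "\<exists>y\<in>tree n. B < tree_dist n x y"
    using tree_point_in_tree[OF n tree_n_adics[OF x]] by (intro bexI[of _ ?y]) auto
qed (use tree_point_in_tree[OF n Ints_n_adics[of 0]] in auto)

lemma cocompact_tree: assumes n: "n \<ge> 1" shows "cocompact_action (BS1 n) (tree n) (tree_dist n) (tree_action n)"
  unfolding cocompact_action_def
proof (intro exI conjI)
  let ?K = "tree_point n 0 ` {0..1}"
  show "compactin (Metric_space.mtopology (tree n) (tree_dist n)) ?K"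
    by (rule image_compactin[OF _ continuous_tree_point[OF n Ints_n_adics]]) auto
  have cover: "p \<in> (\<Union>g\<in>carrier (BS1 n). tree_action n g ` ?K)" if p: "p \<in> tree n" for p
  proof -
    obtain b where b: "b \<in> n_adics n" "of_rat b = snd p"
      using tree_n_adics[OF p] of_rat_n_adics[OF n] by (metis imageE)
    have "p = tree_action n (- \<lfloor>fst p\<rfloor>, b) (tree_point n 0 (frac (fst p)))"
      using tree_action_tree_point[OF n Ints_n_adics[of 0]] tree_point_self[OF n p] b
      by (simp add: frac_def)
    moreover have "frac (fst p) \<in> {0..1}" using frac_lt_1[of "fst p"] by (simp add: frac_ge_0)
    moreover have "(- \<lfloor>fst p\<rfloor>, b) \<in> carrier (BS1 n)" using b by (simp add: BS1_carrier)
    ultimately show ?thesis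
      by (intro UN_I[of "(- \<lfloor>fst p\<rfloor>, b)"] image_eqI[of p _ "tree_point n 0 (frac (fst p))"] imageI)
  qed
  show "(\<Union>g\<in>carrier (BS1 n). tree_action n g ` ?K) = tree n"
  proof
    show "(\<Union>g\<in>carrier (BS1 n). tree_action n g ` ?K) \<subseteq> tree n"
      using tree_point_in_tree[OF n Ints_n_adics[OF Ints_0]] by (blast intro: tree_action_in_tree[OF n])
  qed (use cover in blast)
qed

lemma cocompact_hyperbolic_space_tree:
  "n \<ge> 1 \<Longrightarrow> cocompact_hyperbolic_space (BS1 n) (tree n) (tree_dist n) (tree_action n)"
  by (simp add: cocompact_hyperbolic_space_def metric_tree unbounded_tree proper_tree geodesic_tree
      gromov_hyperbolic_tree isometric_action_tree cocompact_tree)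

section \<open>The hyperbolic plane\<close>

text \<open>A model of the hyperbolic plane: (x, h) stands for x + i e^h in the upper half plane, and
  the distance is the length of the shortest path that rises vertically to some height m \<ge> h, h',
  follows the horocycle at height m (along which horizontal distances shrink by e^-m) and
  descends again. The minimum of 2 m + D e^-m over m \<ge> M is horo_length M D, attained at
  max M (ln (D / 2)).\<close>

definition horo_length :: "real \<Rightarrow> real \<Rightarrow> real" where
  "horo_length M D = (if D \<le> 2 * exp M then 2 * M + D * exp (- M) else 2 * ln (D / 2) + 2)"

definition hplane_dist :: "real \<times> real \<Rightarrow> real \<times> real \<Rightarrow> real" where
  "hplane_dist p q = horo_length (max (snd p) (snd q)) \<bar>fst p - fst q\<bar> - snd p - snd q"

lemma horo_length_le:
  assumes D: "0 \<le> D" and m: "M \<le> m"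
  shows "horo_length M D \<le> 2 * m + D * exp (- m)"
proof (cases "D \<le> 2 * exp M")
  case True
  define t where "t = m - M"
  have "D * exp (- M) \<le> 2 * exp M * exp (- M)" using True by (intro mult_right_mono) auto
  then have "D * exp (- M) \<le> 2" by (simp add: mult.assoc exp_minus_inverse)
  moreover have "0 \<le> t" using m by (simp add: t_def)
  then have "0 \<le> 1 - exp (- t)" by simp
  moreover have "1 - exp (- t) \<le> t" using exp_ge_add_one_self[of "- t"] by simp
  ultimately have "D * exp (- M) * (1 - exp (- t)) \<le> 2 * t"
    by (intro mult_mono) (use D in auto)
  moreover have "exp (- m) = exp (- M) * exp (- t)" by (simp add: t_def flip: exp_add)
  ultimately show ?thesis using True by (simp add: horo_length_def t_def algebra_simps)
next
  case False
  then have D2: "D / 2 > 0" using exp_gt_zero[of M] by linarith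
  define u where "u = m - ln (D / 2)"
  have "D * exp (- m) = D * exp (- ln (D / 2)) * exp (- u)" by (simp add: u_def flip: exp_add)
  also have "D * exp (- ln (D / 2)) = 2" using D2 by (simp add: exp_minus field_simps)
  finally have "D * exp (- m) = 2 * exp (- u)" .
  moreover have "1 - u \<le> exp (- u)" using exp_ge_add_one_self[of "- u"] by simp
  ultimately show ?thesis using False by (simp add: horo_length_def u_def)
qed

lemma horo_length_attained:
  assumes "0 \<le> D" shows "\<exists>m\<ge>M. horo_length M D = 2 * m + D * exp (- m)"
proof (cases "D \<le> 2 * exp M")
  case True
  then show ?thesis by (intro exI[of _ M]) (simp add: horo_length_def)
next
  case False
  then have D2: "D / 2 > 0" using exp_gt_zero[of M] by linarith
  then have "M \<le> ln (D / 2)" using False by (simp add: ln_ge_iff)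
  moreover have "D * exp (- ln (D / 2)) = 2" using D2 by (simp add: exp_minus field_simps)
  ultimately show ?thesis using False by (intro exI[of _ "ln (D / 2)"]) (simp add: horo_length_def)
qed

lemma horo_length_shift:
  assumes "0 \<le> D" shows "horo_length (M + c) (exp c * D) = horo_length M D + 2 * c"
proof (cases "D = 0")
  case False
  have "exp c * D \<le> 2 * exp (M + c) \<longleftrightarrow> D \<le> 2 * exp M" by (simp add: exp_add)
  moreover have "exp c * D * exp (- (M + c)) = D * exp (- M) * (exp c * exp (- c))"
    by (simp add: mult_ac flip: exp_add)
  then have "exp c * D * exp (- (M + c)) = D * exp (- M)" by (simp add: exp_minus_inverse)
  moreover have "ln (exp c * D / 2) = c + ln (D / 2)" using assms False by (simp add: ln_mult ln_div)
  ultimately show ?thesis unfolding horo_length_def by (simp add: algebra_simps)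
qed (simp add: horo_length_def)

lemma horo_length_approx:
  assumes D: "0 \<le> D" shows "\<bar>horo_length M D - 2 * ln (max (exp M) D)\<bar> \<le> 2"
proof (cases "D \<le> 2 * exp M")
  case True
  have "D * exp (- M) \<le> 2 * exp M * exp (- M)" using True by (intro mult_right_mono) auto
  then have "D * exp (- M) \<le> 2" by (simp add: mult.assoc exp_minus_inverse)
  moreover have "M \<le> ln (max (exp M) D)" by (simp add: ln_ge_iff less_max_iff_disj)
  moreover have "ln (max (exp M) D) \<le> ln (exp (ln 2 + M))"
    using True by (subst ln_le_cancel_iff) (auto simp: less_max_iff_disj exp_add)
  ultimately show ?thesis
    using True mult_nonneg_nonneg[OF D exp_ge_zero, of "- M"] ln_2_less_1 by (simp add: horo_length_def abs_le_iff)
next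
  case False
  then have "exp M < D" using exp_gt_zero[of M] by linarith
  then have "D > 0" "max (exp M) D = D" using exp_gt_zero[of M] by (linarith, simp add: max_def)
  then show ?thesis
    using False ln_2_less_1 by (simp add: horo_length_def ln_div abs_le_iff)
qed

lemma hplane_dist_le:
  assumes "max (snd p) (snd q) \<le> m"
  shows "hplane_dist p q \<le> 2 * m - snd p - snd q + \<bar>fst p - fst q\<bar> * exp (- m)"
  using horo_length_le[OF abs_ge_zero assms, of "fst p - fst q"] by (simp add: hplane_dist_def)

lemma hplane_dist_attained:
  "\<exists>m\<ge>max (snd p) (snd q). hplane_dist p q = 2 * m - snd p - snd q + \<bar>fst p - fst q\<bar> * exp (- m)"
  using horo_length_attained[OF abs_ge_zero, of "max (snd p) (snd q)" "fst p - fst q"]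
  by (auto simp: hplane_dist_def)

lemma hplane_dist_vertical: "hplane_dist (x, a) (x, b) = \<bar>a - b\<bar>"
  by (simp add: hplane_dist_def horo_length_def max_def)

lemma metric_hplane: "Metric_space UNIV hplane_dist"
proof
  fix x y :: "real \<times> real"
  obtain m where m: "m \<ge> max (snd x) (snd y)"
    "hplane_dist x y = 2 * m - snd x - snd y + \<bar>fst x - fst y\<bar> * exp (- m)"
    using hplane_dist_attained by blast
  show "0 \<le> hplane_dist x y" using m by simp
  show "hplane_dist x y = hplane_dist y x" by (simp add: hplane_dist_def max.commute abs_minus_commute)
  show "hplane_dist x y = 0 \<longleftrightarrow> x = y"
  proof
    assume "hplane_dist x y = 0"
    then have "2 * m - snd x - snd y = 0" "\<bar>fst x - fst y\<bar> * exp (- m) = 0"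
      using m by (smt (verit) max.bounded_iff mult_nonneg_nonneg abs_ge_zero exp_ge_zero)+
    then show "x = y" using m(1) by (simp add: prod_eq_iff)
  qed (simp add: hplane_dist_def horo_length_def)
next
  fix x y z :: "real \<times> real"
  obtain m1 where m1: "m1 \<ge> max (snd x) (snd y)"
    "hplane_dist x y = 2 * m1 - snd x - snd y + \<bar>fst x - fst y\<bar> * exp (- m1)"
    using hplane_dist_attained by blast
  obtain m2 where m2: "m2 \<ge> max (snd y) (snd z)"
    "hplane_dist y z = 2 * m2 - snd y - snd z + \<bar>fst y - fst z\<bar> * exp (- m2)"
    using hplane_dist_attained by blast
  \<comment> \<open>Concatenate the two paths at the common height max m1 m2.\<close>
  define m where "m = max m1 m2"
  have "hplane_dist x z \<le> 2 * m - snd x - snd z + \<bar>fst x - fst z\<bar> * exp (- m)"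
    by (rule hplane_dist_le) (use m1 m2 in \<open>auto simp: m_def\<close>)
  also have "\<bar>fst x - fst z\<bar> * exp (- m) \<le> (\<bar>fst x - fst y\<bar> + \<bar>fst y - fst z\<bar>) * exp (- m)"
    by (intro mult_right_mono) auto
  also have "\<dots> \<le> \<bar>fst x - fst y\<bar> * exp (- m1) + \<bar>fst y - fst z\<bar> * exp (- m2)"
    by (simp add: distrib_right m_def add_mono mult_left_mono)
  finally show "hplane_dist x z \<le> hplane_dist x y + hplane_dist y z"
    using m1 m2 by (simp add: m_def max_def split: if_splits)
qed

lemma hplane_displacement_bounds:
  assumes "hplane_dist p q \<le> R"
  shows "\<bar>snd p - snd q\<bar> \<le> R" "\<bar>fst p - fst q\<bar> \<le> R * exp ((R + snd p + snd q) / 2)"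
proof -
  obtain m where m: "m \<ge> max (snd p) (snd q)"
    and e: "hplane_dist p q = 2 * m - snd p - snd q + \<bar>fst p - fst q\<bar> * exp (- m)"
    using hplane_dist_attained by blast
  have "snd p \<le> m" "snd q \<le> m" "0 \<le> \<bar>fst p - fst q\<bar> * exp (- m)" using m by auto
  then have "\<bar>snd p - snd q\<bar> \<le> R" "2 * m \<le> R + snd p + snd q" "\<bar>fst p - fst q\<bar> * exp (- m) \<le> R"
    using e assms by linarith+
  then show "\<bar>snd p - snd q\<bar> \<le> R" by simp
  have "\<bar>fst p - fst q\<bar> \<le> R * exp m"
    using \<open>\<bar>fst p - fst q\<bar> * exp (- m) \<le> R\<close> by (simp add: exp_minus field_simps)
  also have "\<dots> \<le> R * exp ((R + snd p + snd q) / 2)"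
  proof (rule mult_left_mono)
    show "exp m \<le> exp ((R + snd p + snd q) / 2)" using \<open>2 * m \<le> R + snd p + snd q\<close> by simp
    show "0 \<le> R" using \<open>0 \<le> \<bar>fst p - fst q\<bar> * exp (- m)\<close> \<open>\<bar>fst p - fst q\<bar> * exp (- m) \<le> R\<close> by linarith
  qed
  finally show "\<bar>fst p - fst q\<bar> \<le> R * exp ((R + snd p + snd q) / 2)" .
qed

text \<open>Up to a factor 2, this is e^m for the height m of the path realising the distance.\<close>
definition hplane_size :: "real \<times> real \<Rightarrow> real \<times> real \<Rightarrow> real" where
  "hplane_size p q = max (exp (max (snd p) (snd q))) \<bar>fst p - fst q\<bar>"

lemma hplane_size_pos: "hplane_size p q > 0"
  by (simp add: hplane_size_def less_max_iff_disj)

lemma hplane_size_le: "hplane_size p q \<le> 2 * max (hplane_size p r) (hplane_size r q)"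
proof -
  have "exp (snd p) \<le> hplane_size p r" "exp (snd q) \<le> hplane_size r q"
    "\<bar>fst p - fst r\<bar> \<le> hplane_size p r" "\<bar>fst r - fst q\<bar> \<le> hplane_size r q"
    by (simp_all add: hplane_size_def le_max_iff_disj)
  moreover have "exp (max (snd p) (snd q)) = max (exp (snd p)) (exp (snd q))" by (simp add: max_def)
  moreover have "\<bar>fst p - fst q\<bar> \<le> \<bar>fst p - fst r\<bar> + \<bar>fst r - fst q\<bar>" by simp
  ultimately show ?thesis
    using hplane_size_pos[of p r] hplane_size_pos[of r q]
    unfolding hplane_size_def[of p q] by (simp add: max_def split: if_splits)
qed

lemma gromov_hyperbolic_hplane: "gromov_hyperbolic UNIV hplane_dist"
proof (rule gromov_hyperbolicI[where A = "\<lambda>p q. ln (hplane_size p q)" and h = snd and e = "ln 2" and c = 2])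
  fix p q :: "real \<times> real"
  show "ln (hplane_size p q) = ln (hplane_size q p)"
    by (simp add: hplane_size_def max.commute abs_minus_commute)
  show "\<bar>hplane_dist p q - (2 * ln (hplane_size p q) - snd p - snd q)\<bar> \<le> 2"
    using horo_length_approx[OF abs_ge_zero, of "max (snd p) (snd q)" "fst p - fst q"]
    by (simp add: hplane_dist_def hplane_size_def)
next
  fix p q r :: "real \<times> real"
  have "ln (hplane_size p q) \<le> ln (2 * hplane_size p r) \<or> ln (hplane_size p q) \<le> ln (2 * hplane_size r q)"
    using hplane_size_le[of p q r] hplane_size_pos[of p q]
    by (simp add: le_max_iff_disj max_def split: if_splits)
  then show "ln (hplane_size p q) \<le> max (ln (hplane_size p r)) (ln (hplane_size r q)) + ln 2"
    using hplane_size_pos[of p r] hplane_size_pos[of r q] by (auto simp: ln_mult)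
qed simp

lemma geodesic_hplane: "geodesic_metric UNIV hplane_dist"
  unfolding geodesic_metric_def
proof (intro ballI)
  fix x y :: "real \<times> real"
  obtain xp hp xq hq where xy: "x = (xp, hp)" "y = (xq, hq)" by fastforce
  obtain m where m: "m \<ge> max hp hq" and dxy: "hplane_dist x y = 2 * m - hp - hq + \<bar>xp - xq\<bar> * exp (- m)"
    using hplane_dist_attained[of x y] by (auto simp: xy)
  define \<sigma> where "\<sigma> = sgn (xq - xp)"
  define s1 where "s1 = m - hp"
  define s2 where "s2 = s1 + \<bar>xp - xq\<bar> * exp (- m)"
  define L where "L = hplane_dist x y"
  have s: "0 \<le> s1" "s1 \<le> s2" "s2 \<le> L" using m by (auto simp: s1_def s2_def L_def dxy)
  have "(s2 - s1) * exp m = \<bar>xq - xp\<bar>" by (simp add: s2_def exp_minus abs_minus_commute)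
  then have across: "xp + (s2 - s1) * exp m * \<sigma> = xq" by (simp add: \<sigma>_def abs_mult_sgn)
  \<comment> \<open>Up to height m, along the horocycle at unit speed, and down to y.\<close>
  define \<gamma> where "\<gamma> = (\<lambda>s. if s \<le> s1 then (xp, hp + s)
      else if s \<le> s2 then (xp + (s - s1) * exp m * \<sigma>, m) else (xq, m - (s - s2)))"
  have up: "\<gamma> s = (xp, hp + s)" if "s \<in> {0..s1}" for s using that by (simp add: \<gamma>_def)
  have along: "\<gamma> s = (xp + (s - s1) * exp m * \<sigma>, m)" if "s \<in> {s1..s2}" for s
    using that by (auto simp: \<gamma>_def s1_def)
  have down: "\<gamma> s = (xq, m - (s - s2))" if "s \<in> {s2..L}" for s
    using that s across by (auto simp: \<gamma>_def s1_def)
  have M: "Metric_space UNIV hplane_dist" by (rule metric_hplane)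
  have horizontal: "hplane_dist (\<gamma> s) (\<gamma> u) \<le> \<bar>s - u\<bar>" if su: "s \<in> {s1..s2}" "u \<in> {s1..s2}" for s u
  proof -
    have "hplane_dist (\<gamma> s) (\<gamma> u) \<le> \<bar>(s - u) * \<sigma> * exp m\<bar> * exp (- m)"
      using hplane_dist_le[of "\<gamma> s" "\<gamma> u" m] su by (simp add: along algebra_simps)
    also have "\<dots> = \<bar>s - u\<bar> * \<bar>\<sigma>\<bar>" by (simp add: abs_mult exp_minus)
    also have "\<dots> \<le> \<bar>s - u\<bar>" by (intro mult_left_le) (auto simp: \<sigma>_def abs_sgn_eq)
    finally show ?thesis .
  qed
  have first: "hplane_dist (\<gamma> s) (\<gamma> u) \<le> \<bar>s - u\<bar>" if "s \<in> {0..s2}" "u \<in> {0..s2}" for s u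
    by (rule one_lipschitz_concat[OF M s(1,2) _ _ horizontal that])
      (auto simp: up hplane_dist_vertical)
  have "hplane_dist (\<gamma> s) (\<gamma> u) \<le> \<bar>s - u\<bar>" if "s \<in> {0..L}" "u \<in> {0..L}" for s u
    by (rule one_lipschitz_concat[OF M _ s(3) _ first _ that])
      (use s in \<open>auto simp: down hplane_dist_vertical abs_minus_commute\<close>)
  moreover have "\<gamma> 0 = x" using up[of 0] s by (simp add: xy)
  moreover have "L = s2 + (m - hq)" by (simp add: L_def dxy s1_def s2_def)
  then have "\<gamma> L = y" using down[of L] s by (simp add: xy)
  ultimately show "\<exists>\<gamma>. \<gamma> 0 = x \<and> \<gamma> (hplane_dist x y) = y \<and> \<gamma> ` {0..hplane_dist x y} \<subseteq> UNIV \<and>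
      (\<forall>s\<in>{0..hplane_dist x y}. \<forall>u\<in>{0..hplane_dist x y}. hplane_dist (\<gamma> s) (\<gamma> u) = \<bar>s - u\<bar>)"
    using geodesic_of_one_lipschitz[OF M, of x y \<gamma>] unfolding L_def by blast
qed

lemma continuous_map_id_hplane: "continuous_map euclidean (Metric_space.mtopology UNIV hplane_dist) id"
proof (rule continuous_map_to_mtopologyI[OF metric_hplane])
  fix x :: "real \<times> real" and e :: real assume e: "e > 0"
  define E where "E = 1 + exp (- snd x)"
  define \<delta> where "\<delta> = min 1 (e / (2 * E))"
  have E: "E > 0" by (simp add: E_def add_pos_pos)
  show "\<exists>\<delta>>0. \<forall>y. dist y x < \<delta> \<longrightarrow> hplane_dist (id x) (id y) < e"
  proof (intro exI[of _ \<delta>] conjI allI impI)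
    show "\<delta> > 0" using e E by (simp add: \<delta>_def)
    fix y :: "real \<times> real" assume dy: "dist y x < \<delta>"
    have a: "\<bar>fst x - fst y\<bar> < \<delta>" "\<bar>snd x - snd y\<bar> < \<delta>"
      using dist_fst_le[of y x] dist_snd_le[of y x] dy by (simp_all add: dist_real_def abs_minus_commute)
    have "2 * max (snd x) (snd y) - snd x - snd y = \<bar>snd x - snd y\<bar>" by (simp add: max_def)
    then have "hplane_dist x y \<le> \<bar>snd x - snd y\<bar> + \<bar>fst x - fst y\<bar> * exp (- max (snd x) (snd y))"
      using hplane_dist_le[of x y "max (snd x) (snd y)"] by simp
    also have "\<dots> \<le> \<delta> + \<delta> * exp (- snd x)"
      using a by (intro add_mono mult_mono) auto
    also have "\<dots> = \<delta> * E" by (simp add: E_def algebra_simps)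
    also have "\<dots> < e" using E e by (simp add: \<delta>_def min_def field_simps split: if_splits)
    finally show "hplane_dist (id x) (id y) < e" by simp
  qed
qed simp

lemma proper_hplane: "proper_metric UNIV hplane_dist"
  unfolding proper_metric_def
proof (intro ballI allI)
  interpret Metric_space UNIV hplane_dist by (rule metric_hplane)
  fix p :: "real \<times> real" and \<rho> :: real
  define K where "K = {fst p - \<rho> * exp (snd p + \<rho>)..fst p + \<rho> * exp (snd p + \<rho>)} \<times> {snd p - \<rho>..snd p + \<rho>}"
  have "mcball p \<rho> \<subseteq> K"
  proof
    fix q assume "q \<in> mcball p \<rho>"
    then have dq: "hplane_dist p q \<le> \<rho>" by simp
    note bounds = hplane_displacement_bounds[OF dq]
    have "0 \<le> \<rho>" using dq nonneg[of p q] by linarith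
    moreover have "snd q \<le> snd p + \<rho>" using bounds(1) by (simp add: abs_le_iff)
    then have "(\<rho> + snd p + snd q) / 2 \<le> snd p + \<rho>" by (simp add: field_simps)
    ultimately have "\<rho> * exp ((\<rho> + snd p + snd q) / 2) \<le> \<rho> * exp (snd p + \<rho>)"
      by (intro mult_left_mono) auto
    then show "q \<in> K" using bounds by (auto simp: K_def abs_le_iff mem_Times_iff)
  qed
  moreover have "compactin mtopology K"
    using image_compactin[OF _ continuous_map_id_hplane, of K] by (simp add: K_def compact_Times)
  ultimately show "compactin mtopology (mcball p \<rho>)" using closed_compactin by blast
qed

lemma unbounded_hplane: "unbounded_metric UNIV hplane_dist"
  unfolding unbounded_metric_def
proof (intro conjI ballI allI)
  fix x :: "real \<times> real" and B :: real
  have "hplane_dist x (fst x, snd x + \<bar>B\<bar> + 1) = \<bar>B\<bar> + 1"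
    using hplane_dist_vertical[of "fst x" "snd x"] by simp
  then show "\<exists>y\<in>UNIV. B < hplane_dist x y" by (intro bexI[of _ "(fst x, snd x + \<bar>B\<bar> + 1)"]) auto
qed simp

text \<open>In the upper half plane this is the map z \<mapsto> n^k z + b.\<close>
definition hplane_action :: "nat \<Rightarrow> int \<times> rat \<Rightarrow> real \<times> real \<Rightarrow> real \<times> real" where
  "hplane_action n g p = (real n powi fst g * fst p + of_rat (snd g), snd p + of_int (fst g) * ln (real n))"

lemma exp_of_int_mult_ln: assumes "n \<ge> 1" shows "exp (of_int k * ln (real n)) = real n powi k"
proof -
  have "exp (of_int k * ln (real n)) = real n powr of_int k" using assms by (simp add: powr_def)
  also have "\<dots> = real n powi k" using assms by (simp add: powr_real_of_int')
  finally show ?thesis .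
qed

lemma hplane_action_isometry:
  assumes "n \<ge> 1" shows "hplane_dist (hplane_action n g p) (hplane_action n g q) = hplane_dist p q"
proof -
  define c where "c = of_int (fst g) * ln (real n)"
  have "fst (hplane_action n g p) - fst (hplane_action n g q) = real n powi fst g * (fst p - fst q)"
    by (simp add: hplane_action_def algebra_simps)
  then have D: "\<bar>fst (hplane_action n g p) - fst (hplane_action n g q)\<bar> = exp c * \<bar>fst p - fst q\<bar>"
    using assms by (simp add: c_def exp_of_int_mult_ln abs_mult)
  have M: "max (snd (hplane_action n g p)) (snd (hplane_action n g q)) = max (snd p) (snd q) + c"
    by (simp add: hplane_action_def c_def)
  show ?thesis
    unfolding hplane_dist_def D M horo_length_shift[OF abs_ge_zero] by (simp add: hplane_action_def c_def)
qed

lemma isometric_action_hplane: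
  assumes n: "n \<ge> 1" shows "isometric_action (BS1 n) UNIV hplane_dist (hplane_action n)"
  unfolding isometric_action_def
proof (intro conjI ballI)
  show "group_action (BS1 n) UNIV (hplane_action n)"
  proof (rule group_actionI[OF group_BS1[OF n]])
    fix g h :: "int \<times> rat" and x :: "real \<times> real"
    show "hplane_action n (g \<otimes>\<^bsub>BS1 n\<^esub> h) x = hplane_action n g (hplane_action n h x)"
      using n by (cases g, cases h)
        (simp add: hplane_action_def BS1_mult of_rat_add of_rat_mult of_rat_powi power_int_add algebra_simps)
  qed (simp_all add: hplane_action_def BS1_one)
qed (rule hplane_action_isometry[OF n])

lemma cocompact_action_hplane:
  assumes n: "n \<ge> 2" shows "cocompact_action (BS1 n) UNIV hplane_dist (hplane_action n)"
  unfolding cocompact_action_def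
proof (intro exI conjI)
  let ?K = "{0..1::real} \<times> {0..ln (real n)}"
  show "compactin (Metric_space.mtopology UNIV hplane_dist) ?K"
    using image_compactin[OF _ continuous_map_id_hplane, of ?K] by (simp add: compact_Times)
  have "p \<in> (\<Union>g\<in>carrier (BS1 n). hplane_action n g ` ?K)" for p :: "real \<times> real"
  proof -
    obtain x h where p: "p = (x, h)" by fastforce
    have ln: "ln (real n) > 0" using n by simp
    define k where "k = \<lfloor>h / ln (real n)\<rfloor>"
    define E where "E = real n powi k"
    define z where "z = \<lfloor>x / E\<rfloor>"
    define b :: rat where "b = of_nat n powi k * of_int z"
    have E: "E > 0" using n by (simp add: E_def)
    have "0 \<le> h - of_int k * ln (real n)" "h - of_int k * ln (real n) \<le> ln (real n)"
      using ln floor_divide_lower[OF ln, of h] floor_divide_upper[OF ln, of h] by (simp_all add: k_def algebra_simps)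
    moreover have "0 \<le> x / E - of_int z" "x / E - of_int z \<le> 1"
      by (simp_all add: z_def) linarith
    moreover have "hplane_action n (k, b) (x / E - of_int z, h - of_int k * ln (real n)) = p"
      using E by (simp add: hplane_action_def p b_def of_rat_mult of_rat_powi E_def[symmetric] field_simps)
    moreover have "(k, b) \<in> carrier (BS1 n)"
      using n by (simp add: BS1_carrier b_def n_adics_powi_mult Ints_n_adics)
    ultimately show ?thesis by (intro UN_I[of "(k, b)"] image_eqI[of p _ "(x / E - of_int z, h - of_int k * ln (real n))"]) auto
  qed
  then show "(\<Union>g\<in>carrier (BS1 n). hplane_action n g ` ?K) = UNIV" by blast
qed

lemma cocompact_hyperbolic_space_hplane:
  "n \<ge> 2 \<Longrightarrow> cocompact_hyperbolic_space (BS1 n) UNIV hplane_dist (hplane_action n)"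
  by (simp add: cocompact_hyperbolic_space_def metric_hplane unbounded_hplane proper_hplane geodesic_hplane
      gromov_hyperbolic_hplane isometric_action_hplane cocompact_action_hplane)

section \<open>The case n = 1\<close>

text \<open>The facts about n = 1 are stated for Suc 0, the simp normal form of 1.\<close>

lemma mem_tree_one: "p \<in> tree (Suc 0) \<longleftrightarrow> snd p = 0"
proof
  assume "p \<in> tree (Suc 0)"
  then have "snd p \<in> \<int>" "0 \<le> snd p" "snd p < 1" by (auto simp: tree_def n_adics_def)
  then obtain z where "snd p = of_int z" "0 \<le> z" "z < 1" by (auto elim: Ints_cases)
  then show "snd p = 0" by simp
qed (simp add: tree_def n_adics_def)

lemma tree_point_one: "tree_point (Suc 0) 0 u = (u, 0)"
  by (simp add: tree_point_def tree_rep_def)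

lemma tree_dist_one:
  assumes "p \<in> tree (Suc 0)" "q \<in> tree (Suc 0)" shows "tree_dist (Suc 0) p q = \<bar>fst p - fst q\<bar>"
proof -
  obtain x y where "p = (x, 0)" "q = (y, 0)" using assms by (metis mem_tree_one prod.collapse)
  then show ?thesis using tree_dist_same_branch[of "Suc 0" 0 x y] by (simp add: tree_point_one Ints_n_adics)
qed

definition line_action :: "int \<times> rat \<Rightarrow> real \<times> real \<Rightarrow> real \<times> real" where
  "line_action g p = (if p \<in> tree 1 then (fst p + of_rat (snd g), snd p) else undefined)"

lemma isometric_action_line: "isometric_action (BS1 1) (tree 1) (tree_dist 1) line_action"
  unfolding isometric_action_def
proof (intro conjI ballI)
  show "group_action (BS1 1) (tree 1) line_action"
  proof (rule group_actionI[OF group_BS1])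
    fix g h p assume "p \<in> tree 1"
    then show "line_action (g \<otimes>\<^bsub>BS1 1\<^esub> h) p = line_action g (line_action h p)"
      by (cases g, cases h) (simp add: line_action_def BS1_mult mem_tree_one of_rat_add)
  qed (simp_all add: line_action_def mem_tree_one BS1_one extensional_def prod_eq_iff)
qed (simp add: line_action_def mem_tree_one tree_dist_one)

lemma cocompact_action_line: "cocompact_action (BS1 1) (tree 1) (tree_dist 1) line_action"
  unfolding cocompact_action_def
proof (intro exI conjI)
  let ?K = "{0..1} \<times> {0::real}"
  have "?K = tree_point 1 0 ` {0..1}" by (auto simp: tree_point_one)
  then show "compactin (Metric_space.mtopology (tree 1) (tree_dist 1)) ?K"
    using image_compactin[OF _ continuous_tree_point[of 1 0]] by (simp add: Ints_n_adics)
  show "(\<Union>g\<in>carrier (BS1 1). line_action g ` ?K) = tree 1"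
  proof
    show "(\<Union>g\<in>carrier (BS1 1). line_action g ` ?K) \<subseteq> tree 1"
      by (auto simp: line_action_def mem_tree_one)
    show "tree 1 \<subseteq> (\<Union>g\<in>carrier (BS1 1). line_action g ` ?K)"
    proof
      fix p assume p: "p \<in> tree 1"
      have "p = line_action (0, of_int \<lfloor>fst p\<rfloor>) (frac (fst p), 0)"
        using p by (simp add: line_action_def mem_tree_one frac_def prod_eq_iff)
      moreover have "(frac (fst p), 0) \<in> ?K" by (simp add: frac_ge_0 less_imp_le[OF frac_lt_1])
      moreover have "(0, of_int \<lfloor>fst p\<rfloor>) \<in> carrier (BS1 1)" by (simp add: BS1_carrier Ints_n_adics)
      ultimately show "p \<in> (\<Union>g\<in>carrier (BS1 1). line_action g ` ?K)"
        by (intro UN_I[of "(0, of_int \<lfloor>fst p\<rfloor>)"] image_eqI[of p _ "(frac (fst p), 0)"])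
    qed
  qed
qed

lemma cocompact_hyperbolic_space_line: "cocompact_hyperbolic_space (BS1 1) (tree 1) (tree_dist 1) line_action"
  unfolding cocompact_hyperbolic_space_def
  using metric_tree[of 1] unbounded_tree[of 1] proper_tree[of 1] geodesic_tree[of 1] gromov_hyperbolic_tree[of 1]
    isometric_action_line cocompact_action_line
  by simp

section \<open>Properness of the diagonal action\<close>

definition bounds_translation ::
  "nat \<Rightarrow> (real \<times> real) set \<Rightarrow> (real \<times> real \<Rightarrow> real \<times> real \<Rightarrow> real) \<Rightarrow> (int \<times> rat \<Rightarrow> real \<times> real \<Rightarrow> real \<times> real) \<Rightarrow> bool"
  where "bounds_translation n Y d \<phi> \<longleftrightarrow> (\<forall>z\<in>Y. \<forall>R::real. \<exists>C. \<forall>g\<in>carrier (BS1 n).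
    \<bar>real_of_int (fst g)\<bar> \<le> R \<longrightarrow> d z (\<phi> g z) \<le> R \<longrightarrow> \<bar>real_of_rat (snd g)\<bar> \<le> C)"

lemma bounds_translation_line: "bounds_translation 1 (tree 1) (tree_dist 1) line_action"
  unfolding bounds_translation_def
proof (intro ballI allI)
  fix z and R :: real assume "z \<in> tree 1"
  then show "\<exists>C. \<forall>g\<in>carrier (BS1 1). \<bar>of_int (fst g)\<bar> \<le> R \<longrightarrow> tree_dist 1 z (line_action g z) \<le> R \<longrightarrow>
      \<bar>real_of_rat (snd g)\<bar> \<le> C"
    by (intro exI[of _ R]) (auto simp: line_action_def mem_tree_one tree_dist_one)
qed

lemma bounds_translation_hplane:
  assumes n: "n \<ge> 1" shows "bounds_translation n UNIV hplane_dist (hplane_action n)"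
  unfolding bounds_translation_def
proof (intro ballI allI)
  fix z :: "real \<times> real" and R :: real
  obtain x h where z: "z = (x, h)" by fastforce
  define C where "C = \<bar>R\<bar> * exp ((R + 2 * h + R * ln (real n)) / 2) + \<bar>x\<bar> + real n powi \<lceil>R\<rceil> * \<bar>x\<bar>"
  show "\<exists>C. \<forall>g\<in>carrier (BS1 n). \<bar>of_int (fst g)\<bar> \<le> R \<longrightarrow> hplane_dist z (hplane_action n g z) \<le> R \<longrightarrow>
      \<bar>real_of_rat (snd g)\<bar> \<le> C"
  proof (intro exI[of _ C] ballI impI)
    fix g :: "int \<times> rat" assume kR: "\<bar>of_int (fst g)\<bar> \<le> R" and dR: "hplane_dist z (hplane_action n g z) \<le> R"
    obtain k b where g: "g = (k, b)" by fastforce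
    define E where "E = real n powi k"
    have gz: "hplane_action n g z = (E * x + of_rat b, h + of_int k * ln (real n))"
      by (simp add: hplane_action_def g z E_def)
    have "\<bar>x - (E * x + of_rat b)\<bar> \<le> R * exp ((R + h + (h + of_int k * ln (real n))) / 2)"
      using hplane_displacement_bounds(2)[OF dR] unfolding gz by (simp add: z)
    also have "\<dots> \<le> \<bar>R\<bar> * exp ((R + 2 * h + R * ln (real n)) / 2)"
    proof -
      have "of_int k * ln (real n) \<le> R * ln (real n)" using kR n by (intro mult_right_mono) (auto simp: g)
      then show ?thesis by (intro mult_mono) simp_all
    qed
    finally have A: "\<bar>x - (E * x + of_rat b)\<bar> \<le> \<bar>R\<bar> * exp ((R + 2 * h + R * ln (real n)) / 2)" .
    have "E \<le> real n powi \<lceil>R\<rceil>"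
      unfolding E_def by (rule power_int_increasing) (use kR n in \<open>auto simp: le_ceiling_iff g\<close>)
    then have "\<bar>E * x\<bar> \<le> real n powi \<lceil>R\<rceil> * \<bar>x\<bar>" using n by (simp add: E_def abs_mult mult_right_mono)
    moreover have "\<bar>real_of_rat b\<bar> \<le> \<bar>x - (E * x + of_rat b)\<bar> + \<bar>x\<bar> + \<bar>E * x\<bar>" by linarith
    ultimately show "\<bar>real_of_rat (snd g)\<bar> \<le> C" using A unfolding C_def g snd_conv by linarith
  qed
qed

lemma tree_displacement:
  assumes n: "n \<ge> 1" and g: "g \<in> carrier (BS1 n)" and z: "z \<in> tree n"
    and dR: "tree_dist n z (tree_action n g z) \<le> R"
  shows "\<bar>real_of_int (fst g)\<bar> \<le> R \<and> merged n (snd z - (of_rat (snd g) + real n powi fst g * snd z)) (fst z + R)"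
proof -
  define w where "w = of_rat (snd g) + real n powi fst g * snd z"
  have Z: "snd z \<in> n_adics n" "w \<in> n_adics n" "snd z - w \<in> n_adics n"
    using of_rat_BS1_n_adics[OF n g] n_adics_powi_mult[OF n tree_n_adics[OF z]] tree_n_adics[OF z]
    by (auto simp: w_def intro: n_adics_add n_adics_diff)
  have gz: "tree_action n g z = tree_point n w (fst z - of_int (fst g))"
    using z by (simp add: tree_action_def w_def)
  have "\<bar>fst z - fst (tree_action n g z)\<bar> \<le> R"
    using height_diff_le_tree_dist[OF n z tree_action_in_tree[OF n g z]] dR by linarith
  then have k: "\<bar>real_of_int (fst g)\<bar> \<le> R" by (simp add: gz tree_point_def)
  have "2 * merge_height n (max (fst z) (fst z - of_int (fst g))) (snd z - w) - fst z - (fst z - of_int (fst g)) \<le> R"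
    using dR tree_point_self[OF n z] tree_dist_tree_point[OF n Z(1,2), of "fst z" "fst z - of_int (fst g)"]
    by (simp add: gz)
  then have "merge_height n (max (fst z) (fst z - of_int (fst g))) (snd z - w) \<le> fst z + R"
    using k by (simp add: abs_le_iff)
  then have "merged n (snd z - w) (fst z + R)" by (simp add: merge_height_iff[OF n Z(3)])
  with k show ?thesis by (simp add: w_def)
qed

lemma finite_BS1_bounded:
  fixes R C :: real
  assumes n: "n \<ge> 1"
  shows "finite {g \<in> carrier (BS1 n). \<bar>real_of_int (fst g)\<bar> \<le> R \<and> \<bar>of_rat (snd g)\<bar> \<le> C \<and>
    merged n (r - (of_rat (snd g) + real n powi fst g * r)) m}"
proof -
  define B where "B = (\<lambda>k. {s. merged n ((r - real n powi k * r) - s) m \<and> \<bar>s\<bar> \<le> C})"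
  have "finite (B k)" for k unfolding B_def by (rule finite_merged_bounded[OF n])
  then have "finite (of_rat -` B k :: rat set)" for k
    by (rule finite_vimageI) (simp add: inj_def)
  then have "finite (\<Union>k\<in>{-\<lceil>R\<rceil>..\<lceil>R\<rceil>}. {k} \<times> (of_rat -` B k :: rat set))" by blast
  moreover have "g \<in> (\<Union>k\<in>{-\<lceil>R\<rceil>..\<lceil>R\<rceil>}. {k} \<times> of_rat -` B k)"
    if "\<bar>real_of_int (fst g)\<bar> \<le> R" "\<bar>of_rat (snd g)\<bar> \<le> C"
      "merged n (r - (of_rat (snd g) + real n powi fst g * r)) m" for g
  proof -
    have "- real_of_int \<lceil>R\<rceil> \<le> of_int (fst g)" "real_of_int (fst g) \<le> of_int \<lceil>R\<rceil>"
      using abs_le_D1[OF that(1)] abs_le_D2[OF that(1)] le_of_int_ceiling[of R] by linarith+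
    then have "fst g \<in> {-\<lceil>R\<rceil>..\<lceil>R\<rceil>}" by (simp flip: of_int_minus)
    moreover have "of_rat (snd g) \<in> B (fst g)" using that(2,3) by (simp add: B_def algebra_simps)
    ultimately show ?thesis by (cases g) auto
  qed
  then have "{g \<in> carrier (BS1 n). \<bar>real_of_int (fst g)\<bar> \<le> R \<and> \<bar>of_rat (snd g)\<bar> \<le> C \<and>
      merged n (r - (of_rat (snd g) + real n powi fst g * r)) m} \<subseteq> (\<Union>k\<in>{-\<lceil>R\<rceil>..\<lceil>R\<rceil>}. {k} \<times> of_rat -` B k)"
    by blast
  ultimately show ?thesis by (rule finite_subset[rotated])
qed

lemma PPH_BS1:
  fixes Y :: "(real \<times> real) set"
  assumes n: "n \<ge> 1" and Y: "cocompact_hyperbolic_space (BS1 n) Y d \<phi>" and bound: "bounds_translation n Y d \<phi>"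
  shows "PPH (BS1 n)"
proof (rule PPH_of_two_factors[OF cocompact_hyperbolic_space_tree[OF n] Y])
  fix z0 z1 r assume z0: "z0 \<in> tree n" and z1: "z1 \<in> Y"
  obtain C where C: "\<And>g. g \<in> carrier (BS1 n) \<Longrightarrow> \<bar>of_int (fst g)\<bar> \<le> r \<Longrightarrow> d z1 (\<phi> g z1) \<le> r \<Longrightarrow>
      \<bar>real_of_rat (snd g)\<bar> \<le> C"
    using bound z1 unfolding bounds_translation_def by meson
  have "{g \<in> carrier (BS1 n). tree_dist n z0 (tree_action n g z0) + d z1 (\<phi> g z1) \<le> r} \<subseteq>
    {g \<in> carrier (BS1 n). \<bar>real_of_int (fst g)\<bar> \<le> r \<and> \<bar>of_rat (snd g)\<bar> \<le> C \<and>
      merged n (snd z0 - (of_rat (snd g) + real n powi fst g * snd z0)) (fst z0 + r)}"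
  proof (intro subsetI CollectI conjI; elim CollectE conjE)
    fix g assume g: "g \<in> carrier (BS1 n)" and sum: "tree_dist n z0 (tree_action n g z0) + d z1 (\<phi> g z1) \<le> r"
    have "0 \<le> tree_dist n z0 (tree_action n g z0)" by (rule Metric_space.nonneg[OF metric_tree[OF n]])
    moreover have "0 \<le> d z1 (\<phi> g z1)"
      using Y Metric_space.nonneg[of Y d] by (simp add: cocompact_hyperbolic_space_def)
    ultimately have "tree_dist n z0 (tree_action n g z0) \<le> r" "d z1 (\<phi> g z1) \<le> r"
      using sum by auto
    then have "\<bar>real_of_int (fst g)\<bar> \<le> r"
      "merged n (snd z0 - (of_rat (snd g) + real n powi fst g * snd z0)) (fst z0 + r)"
      "\<bar>real_of_rat (snd g)\<bar> \<le> C"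
      using tree_displacement[OF n g z0] C[OF g] by blast+
    with g show "g \<in> carrier (BS1 n)" "\<bar>real_of_int (fst g)\<bar> \<le> r" "\<bar>real_of_rat (snd g)\<bar> \<le> C"
      "merged n (snd z0 - (of_rat (snd g) + real n powi fst g * snd z0)) (fst z0 + r)"
      by blast+
  qed
  then show "finite {g \<in> carrier (BS1 n). tree_dist n z0 (tree_action n g z0) + d z1 (\<phi> g z1) \<le> r}"
    by (rule finite_subset) (rule finite_BS1_bounded[OF n])
qed

theorem lemma3p11:
  fixes n :: nat
  assumes "n \<ge> 1"
  shows "PPH (BS1 n)"
proof (cases "n = 1")
  case True
  then show ?thesis
    using PPH_BS1[OF _ cocompact_hyperbolic_space_line bounds_translation_line] by simp
next
  case False
  with assms have "n \<ge> 2" by linarith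
  then show ?thesis
    using PPH_BS1[OF assms cocompact_hyperbolic_space_hplane bounds_translation_hplane[OF assms]] by simp
qed

end
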